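(* Let $(\Xi,\mathcal{F},P)$ be a probability space and $\{y_t\}_{t\in\mathbb{Z}}$ a real, mean-zero, covariance-stationary series on it; put $\mathcal{F}_t=\sigma(y_s,\,s\le t)$. Assume (D1) $P\{y_1^2>0\}=1$; (D2) $y_t=\sum_{s=0}^{\infty}\kappa_s\epsilon_{t-s}$ with $\kappa_0=1$, $\sum_s|\kappa_s|<\infty$, $\kappa(z)=\sum_s\kappa_s z^s\neq 0$ for $|z|\le 1$, where $\{\epsilon_t\}$ is a martingale difference sequence with respect to $\{\mathcal{F}_t\}$; (D3) $E[\epsilon_t^2\mid\mathcal{F}_{t-1}]=\sigma_\epsilon^2$ a.s. (constant); (D4) $\sup_t|\epsilon_t|\le K<\infty$ a.s. Fix $\beta\in[0,1]$, let $\theta_t$ be generated by the recursive algorithm in the context, and assume there are random variables $k^*$ (integer, $0\le k^*<\infty$) and $K^*\in(0,1)$ such that a.s. $|\theta_{t+k^*}|\le K^*$ for all $t\ge1$. Then for each integer $u\ge0$, $$\frac1t\sum_{s=1}^t\Big(\sum_{j=0}^u\kappa_j^\phi(s)\epsilon_{s-j}\Big)^2=\frac{\sigma_\epsilon^2}{t}\sum_{s=1}^t\sum_{j=0}^u\big(\kappa_j^\phi(s)\big)^2+o_{a.s.}(1).$$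
   Context: Recursive algorithm: set $\theta_1=0$, $\bar P_1=0$, $e_1=y_1$, $x_1=y_1$, $\phi_1=x_1$, and for $t\ge2$: $x_t=y_t-\beta\theta_{t-1}x_{t-1}$; $e_t=y_t-\theta_{t-1}e_{t-1}$; $\phi_t=x_t-\theta_{t-1}\phi_{t-1}$; $\bar P_t=\frac1t\sum_{s=1}^{t-1}\phi_s^2$; $\theta_t=\theta_{t-1}+\bar P_t^{-1}\frac1t\phi_{t-1}e_t$. Coefficients: for $t\ge1$, $j\ge0$ (empty products equal 1), $\kappa_j^x(t)=\sum_{l=0}^{\min(j,t-1)}(-\beta)^l\kappa_{j-l}\prod_{i=1}^l\theta_{t-i}$; $\kappa_j^\phi(1)=\kappa_j$ and $\kappa_j^\phi(t)=\kappa_j^x(t)-\theta_{t-1}\kappa_{j-1}^\phi(t-1)$ for $t\ge2$, with $\kappa_{-1}^\phi(\cdot):=0$; these are the coefficients in $\phi_t=\sum_{j\ge0}\kappa_j^\phi(t)\epsilon_{t-j}$. The notation $o_{a.s.}(1)$ denotes a term converging to $0$ almost surely as $t\to\infty$. *)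

theory Defs
  imports "HOL-Probability.Probability"
begin

definition nat_filtration :: "'a measure \<Rightarrow> (int \<Rightarrow> 'a \<Rightarrow> real) \<Rightarrow> int \<Rightarrow> 'a measure" where
  "nat_filtration M y t =
     sigma (space M) {y s -` A \<inter> space M | s A. s \<le> t \<and> A \<in> sets borel}"

text \<open>State of the recursive algorithm at time t (t >= 1), for a fixed sample path Y (Y t = y_t):
  (theta_t, x_t, e_t, phi_t, S_t) where S_t = sum_{s=1}^t phi_s^2, so that
  Pbar_t = S_{t-1} / t.  Index 0 is a dummy value and never used.\<close>
fun rls_state :: "real \<Rightarrow> (nat \<Rightarrow> real) \<Rightarrow> nat \<Rightarrow> real \<times> real \<times> real \<times> real \<times> real" where
  "rls_state \<beta> Y 0 = (0, 0, 0, 0, 0)"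
| "rls_state \<beta> Y (Suc 0) = (0, Y 1, Y 1, Y 1, (Y 1)\<^sup>2)"
| "rls_state \<beta> Y (Suc (Suc n)) =
     (let t = Suc (Suc n);
          (\<theta>p, xp, ep, \<phi>p, Sp) = rls_state \<beta> Y (Suc n);
          x = Y t - \<beta> * \<theta>p * xp;
          e = Y t - \<theta>p * ep;
          \<phi> = x - \<theta>p * \<phi>p;
          Pbar = (1 / real t) * Sp;
          \<theta> = \<theta>p + inverse Pbar * (1 / real t) * \<phi>p * e
      in (\<theta>, x, e, \<phi>, Sp + \<phi>\<^sup>2))"

definition rls_theta :: "real \<Rightarrow> (nat \<Rightarrow> real) \<Rightarrow> nat \<Rightarrow> real" where
  "rls_theta \<beta> Y t = fst (rls_state \<beta> Y t)"

definition kappa_x :: "real \<Rightarrow> (nat \<Rightarrow> real) \<Rightarrow> (nat \<Rightarrow> real) \<Rightarrow> nat \<Rightarrow> nat \<Rightarrow> real" where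
  "kappa_x \<beta> \<kappa> th t j =
     (\<Sum>l = 0..min j (t - 1). (-\<beta>) ^ l * \<kappa> (j - l) * (\<Prod>i = 1..l. th (t - i)))"

text \<open>kappa^phi_j(t) for t >= 1 (with kappa^phi_{-1} = 0); index t = 0 is a dummy.\<close>
fun kappa_phi :: "real \<Rightarrow> (nat \<Rightarrow> real) \<Rightarrow> (nat \<Rightarrow> real) \<Rightarrow> nat \<Rightarrow> nat \<Rightarrow> real" where
  "kappa_phi \<beta> \<kappa> th 0 j = 0"
| "kappa_phi \<beta> \<kappa> th (Suc 0) j = \<kappa> j"
| "kappa_phi \<beta> \<kappa> th (Suc (Suc n)) 0 = kappa_x \<beta> \<kappa> th (Suc (Suc n)) 0"
| "kappa_phi \<beta> \<kappa> th (Suc (Suc n)) (Suc j) =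
     kappa_x \<beta> \<kappa> th (Suc (Suc n)) (Suc j) - th (Suc n) * kappa_phi \<beta> \<kappa> th (Suc n) j"

end

(*
  The coefficient kappa^phi_j(s) depends on theta only through theta_r for s - j <= r < s.
  Along a path on which |theta_t| <= K* < 1 eventually, the recursion for e_t, x_t and phi_t
  is stable, so these are bounded and the increments
  theta_(t+1) - theta_t = phi_t e_(t+1) / (phi_1^2 + ... + phi_t^2) tend to zero. Hence
  kappa^phi_j(s) differs by a null sequence from the coefficient obtained by freezing theta
  at its value at time s - u - 1, and this replacement changes the centred square
  (sum_j kappa_j eps_(s-j))^2 - sigma^2 sum_j kappa_j^2 only by a null sequence, which is
  invisible in Cesaro means. The frozen coefficients are bounded and predictable, so after
  expanding the square the Cesaro means are averages of bounded martingale differences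
  kappa_j^2 (eps_(s-j)^2 - sigma^2) and kappa_j kappa_k eps_(s-k) eps_(s-j) (j < k); these
  vanish almost surely by the strong law of large numbers that follows from a fourth-moment
  bound and the Borel-Cantelli lemma.
*)
theory Submission
  imports Defs
begin

section \<open>Null sequences and Cesaro means\<close>

lemma abs_power_le:
  fixes a b :: real
  shows "\<bar>a\<bar> \<le> b \<Longrightarrow> \<bar>a ^ k\<bar> \<le> b ^ k"
  by (simp add: power_abs power_mono)

lemma tendsto_zero_mult_Bfun:
  fixes f g :: "'a \<Rightarrow> real"
  assumes "(f \<longlongrightarrow> 0) F" "Bfun g F"
  shows "((\<lambda>x. f x * g x) \<longlongrightarrow> 0) F"
  using bounded_bilinear.Zfun_prod_Bfun[OF bounded_bilinear_mult, of f F g] assms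
  by (simp add: tendsto_Zfun_iff)

lemma square_diff_tendsto_zero:
  fixes f g :: "nat \<Rightarrow> real"
  assumes fg: "(\<lambda>n. f n - g n) \<longlonglongrightarrow> 0" and g: "Bseq g"
  shows "(\<lambda>n. (f n)\<^sup>2 - (g n)\<^sup>2) \<longlonglongrightarrow> 0"
proof -
  have "(\<lambda>n. (f n - g n) * (f n - g n) + (f n - g n) * (2 * g n)) \<longlonglongrightarrow> 0 * 0 + 0"
    by (intro tendsto_add tendsto_mult fg tendsto_zero_mult_Bfun Bseq_mult g Bfun_const)
  then show ?thesis
    by (simp add: power2_eq_square algebra_simps)
qed

lemma cesaro_mean_tendsto_zero:
  fixes q :: "nat \<Rightarrow> real"
  assumes "q \<longlonglongrightarrow> 0"
  shows "(\<lambda>t. (1 / real t) * (\<Sum>s=1..t. q s)) \<longlonglongrightarrow> 0"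
proof (rule LIMSEQ_I)
  fix r :: real assume r: "0 < r"
  from LIMSEQ_D[OF assms, of "r/2"] r obtain N where N: "\<And>n. n \<ge> N \<Longrightarrow> \<bar>q n\<bar> < r/2" by auto
  define P where "P = (\<Sum>s=1..N. \<bar>q s\<bar>)"
  obtain N2 :: nat where N2: "2 * P / r < real N2" using reals_Archimedean2 by blast
  show "\<exists>no. \<forall>n\<ge>no. norm ((1 / real n) * (\<Sum>s=1..n. q s) - 0) < r"
  proof (intro exI[of _ "Suc (max N N2)"] allI impI)
    fix n assume n: "Suc (max N N2) \<le> n"
    have "{1..n} = {1..N} \<union> {Suc N..n}" using n by auto
    then have "\<bar>\<Sum>s=1..n. q s\<bar> \<le> P + (\<Sum>s=Suc N..n. \<bar>q s\<bar>)"
      unfolding P_def using sum_abs[of q "{1..n}"] by (simp add: sum.union_disjoint)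
    also have "(\<Sum>s=Suc N..n. \<bar>q s\<bar>) \<le> (\<Sum>s=Suc N..n. r/2)"
      by (intro sum_mono less_imp_le N) auto
    also have "\<dots> \<le> real n * (r/2)" using r by (simp add: mult_right_mono)
    finally have "\<bar>\<Sum>s=1..n. q s\<bar> \<le> P + real n * (r/2)" by simp
    moreover have "P < real n * (r/2)"
    proof -
      have "2 * P / r < real n" using N2 n by linarith
      then show ?thesis using r by (simp add: field_simps)
    qed
    ultimately show "norm ((1 / real n) * (\<Sum>s=1..n. q s) - 0) < r"
      using n by (simp add: abs_mult field_simps)
  qed
qed

lemma square_sum_eq:
  fixes c :: "nat \<Rightarrow> real"
  shows "(\<Sum>j=0..u. c j)\<^sup>2 = (\<Sum>j=0..u. (c j)\<^sup>2) + 2 * (\<Sum>k=0..u. \<Sum>j<k. c j * c k)"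
proof (induction u)
  case (Suc u)
  have "(\<Sum>k=0..Suc u. \<Sum>j<k. c j * c k) = (\<Sum>k=0..u. \<Sum>j<k. c j * c k) + (\<Sum>j=0..u. c j) * c (Suc u)"
    by (simp add: sum_distrib_right atLeast0AtMost lessThan_Suc_atMost)
  then show ?case
    using Suc.IH by (simp add: power2_eq_square algebra_simps)
qed simp

lemma abs_sums_le:
  fixes \<kappa> e :: "nat \<Rightarrow> real"
  assumes sums: "(\<lambda>s. \<kappa> s * e s) sums v" and summable: "summable (\<lambda>s. \<bar>\<kappa> s\<bar>)"
    and e_bounded: "\<And>s. \<bar>e s\<bar> \<le> K"
  shows "\<bar>v\<bar> \<le> K * (\<Sum>s. \<bar>\<kappa> s\<bar>)"
proof -
  have le: "\<bar>\<kappa> s * e s\<bar> \<le> \<bar>\<kappa> s\<bar> * K" for s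
    unfolding abs_mult by (intro mult_left_mono e_bounded) auto
  have dominating: "summable (\<lambda>s. \<bar>\<kappa> s\<bar> * K)"
    using summable by (rule summable_mult2)
  then have abs_summable: "summable (\<lambda>s. \<bar>\<kappa> s * e s\<bar>)"
    by (rule summable_comparison_test[rotated]) (use le in auto)
  have "\<bar>v\<bar> \<le> (\<Sum>s. \<bar>\<kappa> s * e s\<bar>)"
    using summable_rabs[OF abs_summable] sums by (simp add: sums_iff)
  also have "\<dots> \<le> (\<Sum>s. \<bar>\<kappa> s\<bar> * K)"
    by (rule suminf_le[OF le abs_summable dominating])
  finally show ?thesis
    using suminf_mult2[OF summable, of K] by (simp add: mult.commute)
qed

definition clip :: "real \<Rightarrow> real \<Rightarrow> real" where
  "clip K v = max (- K) (min K v)"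

lemma abs_clip_le: "\<bar>clip K v\<bar> \<le> \<bar>K\<bar>"
  by (simp add: clip_def)

lemma clip_eq_self: "\<bar>v\<bar> \<le> K \<Longrightarrow> clip K v = v"
  by (simp add: clip_def)

lemma borel_measurable_clip [measurable]:
  assumes [measurable]: "f \<in> borel_measurable N"
  shows "(\<lambda>x. clip K (f x)) \<in> borel_measurable N"
  unfolding clip_def by measurable

section \<open>A strong law for bounded martingale differences\<close>

lemma fourth_power_step_le:
  fixes a d b :: real
  assumes "\<bar>d\<bar> \<le> b"
  shows "(a + d) ^ 4 \<le> a ^ 4 + 4 * (a ^ 3 * d) + 8 * b\<^sup>2 * a\<^sup>2 + 3 * b ^ 4"
proof -
  have d2: "d\<^sup>2 \<le> b\<^sup>2" and d4: "d ^ 4 \<le> b ^ 4"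
    using abs_power_le[OF assms, of 2] abs_power_le[OF assms, of 4] by simp_all
  have "4 * a * d ^ 3 \<le> 2 * a\<^sup>2 * d\<^sup>2 + 2 * d ^ 4"
    using zero_le_power2[of "d * (a - d)"] by (simp add: power2_eq_square power3_eq_cube power4_eq_xxxx algebra_simps)
  moreover have "a\<^sup>2 * d\<^sup>2 \<le> a\<^sup>2 * b\<^sup>2"
    using d2 by (intro mult_left_mono) auto
  moreover have "(a + d) ^ 4 = a ^ 4 + 4 * (a ^ 3 * d) + 6 * a\<^sup>2 * d\<^sup>2 + 4 * a * d ^ 3 + d ^ 4"
    by (simp add: power2_eq_square power3_eq_cube power4_eq_xxxx algebra_simps)
  ultimately show ?thesis using d4 by (simp add: algebra_simps)
qed

text \<open>The orthogonality assumption is the martingale difference property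
  \<open>E[D\<^sub>n\<^sub>+\<^sub>1 | F\<^sub>n] = 0\<close>, tested against bounded \<open>F\<^sub>n\<close>-measurable functions.\<close>
locale bounded_martingale_difference = prob_space M for M :: "'a measure" +
  fixes F :: "nat \<Rightarrow> 'a measure" and D :: "nat \<Rightarrow> 'a \<Rightarrow> real" and B :: real
  assumes subalgebra: "\<And>n. subalgebra M (F n)"
    and filtration_mono: "\<And>n m. n \<le> m \<Longrightarrow> sets (F n) \<subseteq> sets (F m)"
    and adapted: "\<And>n. D n \<in> borel_measurable (F n)"
    and bounded: "\<And>n x. x \<in> space M \<Longrightarrow> \<bar>D n x\<bar> \<le> B"
    and orthogonal: "\<And>n Z C. Z \<in> borel_measurable (F n) \<Longrightarrow> (\<And>x. x \<in> space M \<Longrightarrow> \<bar>Z x\<bar> \<le> C)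
              \<Longrightarrow> (\<integral>x. Z x * D (Suc n) x \<partial>M) = 0"
begin

definition partial_sum :: "nat \<Rightarrow> 'a \<Rightarrow> real" where
  "partial_sum n x = (\<Sum>s=1..n. D s x)"

lemma partial_sum_Suc: "partial_sum (Suc n) x = partial_sum n x + D (Suc n) x"
  by (simp add: partial_sum_def)

lemma bound_nonneg: "0 \<le> B"
  using bounded[of _ 0] not_empty by (metis abs_ge_zero ex_in_conv order_trans)

lemma partial_sum_measurable: "partial_sum n \<in> borel_measurable (F n)"
proof -
  have "D s \<in> borel_measurable (F n)" if "s \<le> n" for s
    using measurable_from_subalg[OF _ adapted] subalgebra filtration_mono[OF that]
    by (metis subalgebra_def)
  then show ?thesis
    unfolding partial_sum_def by (intro borel_measurable_sum) auto
qed

lemma borel_measurable_partial_sum [measurable]: "partial_sum n \<in> borel_measurable M"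
  using measurable_from_subalg[OF subalgebra partial_sum_measurable] .

lemma borel_measurable_D [measurable]: "D n \<in> borel_measurable M"
  using measurable_from_subalg[OF subalgebra adapted] .

lemma partial_sum_bounded:
  assumes "x \<in> space M"
  shows "\<bar>partial_sum n x\<bar> \<le> real n * B"
proof -
  have "\<bar>partial_sum n x\<bar> \<le> (\<Sum>s=1..n. \<bar>D s x\<bar>)"
    unfolding partial_sum_def by (rule sum_abs)
  also have "\<dots> \<le> (\<Sum>s=1..n. B)"
    using assms by (intro sum_mono bounded)
  finally show ?thesis by simp
qed

lemma integrable_bounded:
  fixes f :: "'a \<Rightarrow> real"
  shows "f \<in> borel_measurable M \<Longrightarrow> (\<And>x. x \<in> space M \<Longrightarrow> \<bar>f x\<bar> \<le> C) \<Longrightarrow> integrable M f"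
  by (intro integrable_const_bound[where B=C]) auto

lemma integrable_partial_sum_power: "integrable M (\<lambda>x. (partial_sum n x) ^ k)"
  by (rule integrable_bounded[where C="(real n * B) ^ k"]) (auto intro: abs_power_le partial_sum_bounded)

lemma integrable_partial_sum_power_mult_D: "integrable M (\<lambda>x. (partial_sum n x) ^ k * D (Suc n) x)"
proof (rule integrable_bounded)
  show "\<bar>(partial_sum n x) ^ k * D (Suc n) x\<bar> \<le> (real n * B) ^ k * B" if "x \<in> space M" for x
    unfolding abs_mult power_abs using that bound_nonneg
    by (intro mult_mono power_mono partial_sum_bounded bounded) auto
qed simp

lemma integral_partial_sum_power_mult_D: "(\<integral>x. (partial_sum n x) ^ k * D (Suc n) x \<partial>M) = 0"
  by (rule orthogonal[where C="(real n * B) ^ k"])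
    (auto intro: abs_power_le partial_sum_bounded borel_measurable_power partial_sum_measurable)

lemma partial_sum_second_moment: "(\<integral>x. (partial_sum n x)\<^sup>2 \<partial>M) \<le> real n * B\<^sup>2"
proof (induction n)
  case 0 then show ?case by (simp add: partial_sum_def)
next
  case (Suc n)
  have int_D2: "integrable M (\<lambda>x. (D (Suc n) x)\<^sup>2)"
  proof (rule integrable_bounded)
    show "\<bar>(D (Suc n) x)\<^sup>2\<bar> \<le> B\<^sup>2" if "x \<in> space M" for x
      using that by (intro abs_power_le bounded)
  qed simp
  have "(\<integral>x. (partial_sum (Suc n) x)\<^sup>2 \<partial>M)
      = (\<integral>x. (partial_sum n x)\<^sup>2 + 2 * (partial_sum n x * D (Suc n) x) + (D (Suc n) x)\<^sup>2 \<partial>M)"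
    by (simp add: partial_sum_Suc power2_eq_square algebra_simps)
  also have "\<dots> = (\<integral>x. (partial_sum n x)\<^sup>2 \<partial>M) + (\<integral>x. (D (Suc n) x)\<^sup>2 \<partial>M)"
    using int_D2 integrable_partial_sum_power integrable_partial_sum_power_mult_D[of n 1]
      integral_partial_sum_power_mult_D[of n 1]
    by simp
  also have "(\<integral>x. (D (Suc n) x)\<^sup>2 \<partial>M) \<le> (\<integral>x. B\<^sup>2 \<partial>M)"
    using int_D2 abs_power_le[OF bounded, of _ _ 2] by (intro integral_mono) auto
  finally show ?case using Suc.IH by (simp add: algebra_simps prob_space)
qed

lemma partial_sum_fourth_moment: "(\<integral>x. (partial_sum n x) ^ 4 \<partial>M) \<le> 11 * B ^ 4 * (real n)\<^sup>2"
proof (induction n)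
  case 0 then show ?case by (simp add: partial_sum_def)
next
  case (Suc n)
  let ?S = "partial_sum n" and ?D = "D (Suc n)"
  have "(partial_sum (Suc n) x) ^ 4 \<le> (?S x) ^ 4 + 4 * ((?S x) ^ 3 * ?D x) + 8 * B\<^sup>2 * (?S x)\<^sup>2 + 3 * B ^ 4"
    if "x \<in> space M" for x
    unfolding partial_sum_Suc using that by (intro fourth_power_step_le bounded)
  then have "(\<integral>x. (partial_sum (Suc n) x) ^ 4 \<partial>M)
      \<le> (\<integral>x. (?S x) ^ 4 + 4 * ((?S x) ^ 3 * ?D x) + 8 * B\<^sup>2 * (?S x)\<^sup>2 + 3 * B ^ 4 \<partial>M)"
    using integrable_partial_sum_power integrable_partial_sum_power_mult_D
    by (intro integral_mono) auto
  also have "\<dots> = (\<integral>x. (?S x) ^ 4 \<partial>M) + 8 * B\<^sup>2 * (\<integral>x. (?S x)\<^sup>2 \<partial>M) + 3 * B ^ 4"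
    using integrable_partial_sum_power integrable_partial_sum_power_mult_D
    by (simp add: integral_partial_sum_power_mult_D prob_space)
  also have "\<dots> \<le> 11 * B ^ 4 * (real n)\<^sup>2 + 8 * B\<^sup>2 * (real n * B\<^sup>2) + 3 * B ^ 4"
    using Suc.IH partial_sum_second_moment[of n] by (intro add_mono mult_left_mono) auto
  also have "\<dots> \<le> 11 * B ^ 4 * (real (Suc n))\<^sup>2"
  proof -
    have "B ^ 4 * (8 * real n + 3) \<le> B ^ 4 * (22 * real n + 11)"
      using bound_nonneg by (intro mult_left_mono) auto
    moreover have "11 * B ^ 4 * (real (Suc n))\<^sup>2 = 11 * B ^ 4 * (real n)\<^sup>2 + B ^ 4 * (22 * real n + 11)"
      by (simp add: power2_eq_square algebra_simps)
    moreover have "8 * B\<^sup>2 * (real n * B\<^sup>2) + 3 * B ^ 4 = B ^ 4 * (8 * real n + 3)"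
      by (simp add: power2_eq_square power4_eq_xxxx algebra_simps)
    ultimately show ?thesis by linarith
  qed
  finally show ?case .
qed

lemma AE_eventually_partial_sum_less:
  assumes "0 < \<delta>"
  shows "AE x in M. eventually (\<lambda>n. \<bar>partial_sum (Suc n) x\<bar> < \<delta> * real (Suc n)) sequentially"
proof -
  define A where "A n = {x \<in> space M. (\<delta> * real (Suc n)) ^ 4 \<le> (partial_sum (Suc n) x) ^ 4}" for n
  have [measurable]: "A n \<in> sets M" for n unfolding A_def by measurable
  have measure_A: "measure M (A n) \<le> (11 * B ^ 4 / \<delta> ^ 4) * inverse (real (Suc n) ^ 2)" for n
  proof -
    have pos: "0 < (\<delta> * real (Suc n)) ^ 4" using assms by simp
    have "measure M (A n) \<le> (\<integral>x. (partial_sum (Suc n) x) ^ 4 \<partial>M) / (\<delta> * real (Suc n)) ^ 4"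
      unfolding A_def by (rule integral_Markov_inequality_measure[OF integrable_partial_sum_power _ _ pos]) auto
    also have "\<dots> \<le> (11 * B ^ 4 * (real (Suc n))\<^sup>2) / (\<delta> * real (Suc n)) ^ 4"
      by (rule divide_right_mono[OF partial_sum_fourth_moment]) (use pos in simp)
    also have "\<dots> = (11 * B ^ 4 / \<delta> ^ 4) * inverse (real (Suc n) ^ 2)"
      using assms by (simp add: field_simps power_mult_distrib power2_eq_square power4_eq_xxxx del: of_nat_Suc)
    finally show ?thesis .
  qed
  have "summable (\<lambda>n. inverse (real (Suc n) ^ 2))"
    using summable_ignore_initial_segment[OF inverse_power_summable[of 2, where 'a=real], of 1]
    by (simp add: power_inverse)
  from summable_mult[OF this, of "11 * B ^ 4 / \<delta> ^ 4"] have "summable (\<lambda>n. measure M (A n))"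
    by (rule summable_comparison_test[rotated]) (use measure_A in auto)
  then have "AE x in M. eventually (\<lambda>n. x \<in> space M - A n) sequentially"
    by (intro borel_cantelli_AE1) (auto simp: emeasure_eq_measure)
  then show ?thesis
  proof (rule AE_mp, intro AE_I2 impI)
    fix x assume "x \<in> space M" and ev: "eventually (\<lambda>n. x \<in> space M - A n) sequentially"
    show "eventually (\<lambda>n. \<bar>partial_sum (Suc n) x\<bar> < \<delta> * real (Suc n)) sequentially"
    proof (rule eventually_mono[OF ev])
      fix n assume "x \<in> space M - A n"
      then have "\<bar>partial_sum (Suc n) x\<bar> ^ 4 < (\<delta> * real (Suc n)) ^ 4"
        by (simp add: A_def not_le power_even_abs del: of_nat_Suc)
      then show "\<bar>partial_sum (Suc n) x\<bar> < \<delta> * real (Suc n)"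
        by (rule power_less_imp_less_base) (use assms in simp)
    qed
  qed
qed

theorem strong_law: "AE x in M. (\<lambda>t. (1 / real t) * (\<Sum>s=1..t. D s x)) \<longlonglongrightarrow> 0"
proof -
  have "AE x in M. \<forall>m. eventually (\<lambda>n. \<bar>partial_sum (Suc n) x\<bar> < inverse (real (Suc m)) * real (Suc n)) sequentially"
    unfolding AE_all_countable by (intro allI AE_eventually_partial_sum_less) simp
  then show ?thesis
  proof (rule AE_mp, intro AE_I2 impI)
    fix x
    assume small: "\<forall>m. eventually (\<lambda>n. \<bar>partial_sum (Suc n) x\<bar> < inverse (real (Suc m)) * real (Suc n)) sequentially"
    have "(\<lambda>n. partial_sum (Suc n) x / real (Suc n)) \<longlonglongrightarrow> 0"
    proof (rule LIMSEQ_I)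
      fix r :: real assume "0 < r"
      then obtain m where m: "inverse (real (Suc m)) < r" using reals_Archimedean by auto
      from small[rule_format, of m] obtain N
        where N: "\<And>n. n \<ge> N \<Longrightarrow> \<bar>partial_sum (Suc n) x\<bar> < inverse (real (Suc m)) * real (Suc n)"
        by (auto simp: eventually_sequentially)
      have "\<bar>partial_sum (Suc n) x\<bar> / real (Suc n) < r" if "n \<ge> N" for n
      proof -
        have "\<bar>partial_sum (Suc n) x\<bar> < inverse (real (Suc m)) * real (Suc n)"
          using N that by blast
        also have "\<dots> < r * real (Suc n)"
          using m by (intro mult_strict_right_mono) auto
        finally show ?thesis by (simp add: divide_less_eq del: of_nat_Suc)
      qed
      then show "\<exists>N. \<forall>n\<ge>N. norm (partial_sum (Suc n) x / real (Suc n) - 0) < r" by auto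
    qed
    then have "(\<lambda>n. (1 / real (Suc n)) * (\<Sum>s=1..Suc n. D s x)) \<longlonglongrightarrow> 0"
      by (simp add: partial_sum_def)
    then show "(\<lambda>t. (1 / real t) * (\<Sum>s=1..t. D s x)) \<longlonglongrightarrow> 0"
      by (rule LIMSEQ_imp_Suc)
  qed
qed

end

lemma (in prob_space) strong_law_predictable_mult_martingale_difference:
  fixes F :: "nat \<Rightarrow> 'a measure" and G H :: "nat \<Rightarrow> 'a \<Rightarrow> real"
  assumes subalgebra: "\<And>n. subalgebra M (F n)"
    and filtration_mono: "\<And>n m. n \<le> m \<Longrightarrow> sets (F n) \<subseteq> sets (F m)"
    and G_predictable: "\<And>n. G n \<in> borel_measurable (F (n - 1))"
    and G_bounded: "\<And>n x. x \<in> space M \<Longrightarrow> \<bar>G n x\<bar> \<le> KG"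
    and H_adapted: "\<And>n. H n \<in> borel_measurable (F n)"
    and H_bounded: "\<And>n x. x \<in> space M \<Longrightarrow> \<bar>H n x\<bar> \<le> KH"
    and H_orthogonal: "\<And>n Z C. Z \<in> borel_measurable (F n) \<Longrightarrow> (\<And>x. x \<in> space M \<Longrightarrow> \<bar>Z x\<bar> \<le> C)
              \<Longrightarrow> (\<integral>x. Z x * H (Suc n) x \<partial>M) = 0"
  shows "AE x in M. (\<lambda>t. (1 / real t) * (\<Sum>s=1..t. G s x * H s x)) \<longlonglongrightarrow> 0"
proof -
  have sub_filtration: "subalgebra (F m) (F n)" if "n \<le> m" for n m
    using subalgebra filtration_mono[OF that] by (simp add: subalgebra_def)
  have G_adapted: "G n \<in> borel_measurable (F n)" for n
    using measurable_from_subalg[OF sub_filtration G_predictable] by simp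
  have KG: "0 \<le> KG"
    using G_bounded[of _ 0] not_empty by (metis abs_ge_zero ex_in_conv order_trans)
  interpret bounded_martingale_difference M F "\<lambda>n x. G n x * H n x" "KG * KH"
  proof
    show "(\<lambda>x. G n x * H n x) \<in> borel_measurable (F n)" for n
      using G_adapted H_adapted by measurable
    show "\<bar>G n x * H n x\<bar> \<le> KG * KH" if "x \<in> space M" for n x
      unfolding abs_mult using that KG by (intro mult_mono G_bounded H_bounded) auto
    show "(\<integral>x. Z x * (G (Suc n) x * H (Suc n) x) \<partial>M) = 0"
      if Z: "Z \<in> borel_measurable (F n)" "\<And>x. x \<in> space M \<Longrightarrow> \<bar>Z x\<bar> \<le> C" for n Z C
    proof -
      have "(\<integral>x. (Z x * G (Suc n) x) * H (Suc n) x \<partial>M) = 0"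
      proof (rule H_orthogonal)
        show "(\<lambda>x. Z x * G (Suc n) x) \<in> borel_measurable (F n)"
          using Z(1) G_predictable[of "Suc n", simplified] by measurable
        show "\<bar>Z x * G (Suc n) x\<bar> \<le> C * KG" if "x \<in> space M" for x
          unfolding abs_mult using that order_trans[OF abs_ge_zero Z(2)[OF that]]
          by (intro mult_mono G_bounded Z(2)) auto
      qed
      then show ?thesis by (simp add: mult.assoc)
    qed
  qed (use subalgebra filtration_mono in auto)
  show ?thesis by (rule strong_law)
qed

lemma (in prob_space) integral_bounded_mult_eq_cond_exp_const:
  assumes subalgebra: "subalgebra M F"
    and f: "integrable M f" and cond_exp: "AE x in M. real_cond_exp M F f x = c"
    and Z: "Z \<in> borel_measurable F" "\<And>x. x \<in> space M \<Longrightarrow> \<bar>Z x\<bar> \<le> C"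
  shows "(\<integral>x. Z x * f x \<partial>M) = c * (\<integral>x. Z x \<partial>M)"
proof -
  interpret sigma_finite_subalgebra M F
    by (intro finite_measure_subalgebra_is_sigma_finite finite_measure_subalgebra.intro
        finite_measure_subalgebra_axioms.intro subalgebra finite_measure_axioms)
  have [measurable]: "Z \<in> borel_measurable M" "f \<in> borel_measurable M"
    using measurable_from_subalg[OF subalgebra Z(1)] f by auto
  have Z_le: "\<bar>Z x\<bar> \<le> \<bar>C\<bar>" if "x \<in> space M" for x
    using Z(2)[OF that] by linarith
  have "integrable M (\<lambda>x. Z x * f x)"
  proof (rule Bochner_Integration.integrable_bound[where f="\<lambda>x. C * f x"])
    show "AE x in M. norm (Z x * f x) \<le> norm (C * f x)"
      by (intro AE_I2) (simp add: abs_mult mult_right_mono Z_le)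
  qed (use f in simp_all)
  then have "(\<integral>x. Z x * f x \<partial>M) = (\<integral>x. Z x * real_cond_exp M F f x \<partial>M)"
    using Z(1) by (simp add: real_cond_exp_intg(2))
  also have "\<dots> = (\<integral>x. c * Z x \<partial>M)"
    using cond_exp by (intro integral_cong_AE) auto
  finally show ?thesis by simp
qed

section \<open>The recursive algorithm\<close>

lemma stable_recursion_bounded:
  fixes v w c :: "nat \<Rightarrow> real"
  assumes rec: "\<And>n. n \<ge> n0 \<Longrightarrow> v (Suc n) = w (Suc n) - c n * v n"
    and w: "\<And>n. n \<ge> n0 \<Longrightarrow> \<bar>w (Suc n)\<bar> \<le> W"
    and c: "\<And>n. n \<ge> n0 \<Longrightarrow> \<bar>c n\<bar> \<le> k" and "k < 1"
  shows "\<exists>B. \<forall>n\<ge>n0. \<bar>v n\<bar> \<le> B"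
proof -
  define B where "B = max \<bar>v n0\<bar> (W / (1 - k))"
  have "W / (1 - k) \<le> B"
    by (simp add: B_def)
  then have "W + k * B \<le> B"
    using \<open>k < 1\<close> by (simp add: divide_le_eq algebra_simps)
  have "\<bar>v n\<bar> \<le> B" if "n \<ge> n0" for n
    using that
  proof (induction n rule: dec_induct)
    case base then show ?case by (simp add: B_def)
  next
    case (step n)
    have "\<bar>v (Suc n)\<bar> \<le> \<bar>w (Suc n)\<bar> + \<bar>c n\<bar> * \<bar>v n\<bar>"
      using rec[OF step(1)] by (simp add: abs_mult[symmetric] abs_triangle_ineq4)
    also have "\<dots> \<le> W + k * B"
      using w[OF step(1)] c[OF step(1)] step(3) order_trans[OF abs_ge_zero c[OF step(1)]]
      by (intro add_mono mult_mono) auto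
    finally show ?case using \<open>W + k * B \<le> B\<close> by linarith
  qed
  then show ?thesis by blast
qed

lemma bounded_div_cumulative_squares_tendsto_zero:
  fixes a S :: "nat \<Rightarrow> real"
  assumes S_Suc: "\<And>n. S (Suc n) = S n + (a (Suc n))\<^sup>2" and S_0: "0 < S 0"
    and a_bounded: "eventually (\<lambda>n. \<bar>a n\<bar> \<le> P) sequentially"
  shows "(\<lambda>n. a n / S n) \<longlonglongrightarrow> 0"
proof -
  have S_mono: "incseq S"
    by (rule incseq_SucI) (simp add: S_Suc)
  then have S_ge: "S 0 \<le> S n" for n
    by (simp add: incseq_def)
  show ?thesis
  proof (cases "bdd_above (range S)")
    case True
    then have "(\<lambda>n. S (Suc n) - S n) \<longlonglongrightarrow> (SUP n. S n) - (SUP n. S n)"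
      using S_mono by (intro tendsto_diff LIMSEQ_Suc LIMSEQ_incseq_SUP)
    then have "(\<lambda>n. sqrt ((a (Suc n))\<^sup>2)) \<longlonglongrightarrow> sqrt 0"
      by (intro tendsto_real_sqrt) (simp add: S_Suc)
    then have "(\<lambda>n. a (Suc n)) \<longlonglongrightarrow> 0"
      by (simp add: tendsto_rabs_zero_iff)
    then have "a \<longlonglongrightarrow> 0"
      by (rule LIMSEQ_imp_Suc)
    moreover have "norm (inverse (S n)) \<le> inverse (S 0)" for n
      using S_ge[of n] order_less_le_trans[OF S_0 S_ge[of n]] S_0
      by (simp add: le_imp_inverse_le)
    then have "Bseq (\<lambda>n. inverse (S n))"
      by (rule BseqI')
    ultimately show ?thesis
      unfolding divide_inverse by (rule tendsto_zero_mult_Bfun)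
  next
    case False
    have "filterlim S at_top sequentially"
    proof (subst filterlim_at_top, intro allI)
      fix Z :: real
      from False obtain m where "Z < S m"
        by (auto simp: bdd_above_def not_le)
      then show "eventually (\<lambda>n. Z \<le> S n) sequentially"
        using S_mono by (intro eventually_sequentiallyI[of m]) (auto dest: monoD[of _ m])
    qed
    then have "(\<lambda>n. inverse (S n)) \<longlonglongrightarrow> 0"
      by (rule tendsto_inverse_0_at_top)
    moreover have "Bseq a"
      using a_bounded by (intro BfunI) auto
    ultimately show ?thesis
      unfolding divide_inverse by (subst mult.commute) (rule tendsto_zero_mult_Bfun)
  qed
qed

definition rls_x :: "real \<Rightarrow> (nat \<Rightarrow> real) \<Rightarrow> nat \<Rightarrow> real" where
  "rls_x \<beta> Y t = fst (snd (rls_state \<beta> Y t))"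

definition rls_e :: "real \<Rightarrow> (nat \<Rightarrow> real) \<Rightarrow> nat \<Rightarrow> real" where
  "rls_e \<beta> Y t = fst (snd (snd (rls_state \<beta> Y t)))"

definition rls_phi :: "real \<Rightarrow> (nat \<Rightarrow> real) \<Rightarrow> nat \<Rightarrow> real" where
  "rls_phi \<beta> Y t = fst (snd (snd (snd (rls_state \<beta> Y t))))"

definition rls_S :: "real \<Rightarrow> (nat \<Rightarrow> real) \<Rightarrow> nat \<Rightarrow> real" where
  "rls_S \<beta> Y t = snd (snd (snd (snd (rls_state \<beta> Y t))))"

lemma rls_initial:
  "rls_theta \<beta> Y 0 = 0" "rls_theta \<beta> Y 1 = 0" "rls_x \<beta> Y 1 = Y 1" "rls_e \<beta> Y 1 = Y 1"
  "rls_phi \<beta> Y 1 = Y 1" "rls_S \<beta> Y 1 = (Y 1)\<^sup>2"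
  by (simp_all add: rls_theta_def rls_x_def rls_e_def rls_phi_def rls_S_def)

lemma rls_Suc:
  assumes "0 < n"
  shows "rls_x \<beta> Y (Suc n) = Y (Suc n) - \<beta> * rls_theta \<beta> Y n * rls_x \<beta> Y n"
    and "rls_e \<beta> Y (Suc n) = Y (Suc n) - rls_theta \<beta> Y n * rls_e \<beta> Y n"
    and "rls_phi \<beta> Y (Suc n) = rls_x \<beta> Y (Suc n) - rls_theta \<beta> Y n * rls_phi \<beta> Y n"
    and "rls_S \<beta> Y (Suc n) = rls_S \<beta> Y n + (rls_phi \<beta> Y (Suc n))\<^sup>2"
    and "rls_theta \<beta> Y (Suc n) = rls_theta \<beta> Y n
           + inverse ((1 / real (Suc n)) * rls_S \<beta> Y n) * (1 / real (Suc n)) * rls_phi \<beta> Y n * rls_e \<beta> Y (Suc n)"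
  using assms
  by (auto simp: gr0_conv_Suc rls_x_def rls_e_def rls_phi_def rls_S_def rls_theta_def Let_def
      simp del: of_nat_Suc split: prod.split)

lemma rls_theta_increment:
  assumes "0 < n"
  shows "rls_theta \<beta> Y (Suc n) - rls_theta \<beta> Y n = rls_phi \<beta> Y n * rls_e \<beta> Y (Suc n) / rls_S \<beta> Y n"
  using assms by (simp add: rls_Suc(5) field_simps del: of_nat_Suc)

lemma rls_components_measurable:
  fixes N :: "'a measure" and Y :: "nat \<Rightarrow> 'a \<Rightarrow> real"
  assumes "\<And>n. 1 \<le> n \<Longrightarrow> n \<le> t \<Longrightarrow> Y n \<in> borel_measurable N"
  shows "(\<lambda>x. rls_theta \<beta> (\<lambda>n. Y n x) t) \<in> borel_measurable N \<and>
         (\<lambda>x. rls_x \<beta> (\<lambda>n. Y n x) t) \<in> borel_measurable N \<and>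
         (\<lambda>x. rls_e \<beta> (\<lambda>n. Y n x) t) \<in> borel_measurable N \<and>
         (\<lambda>x. rls_phi \<beta> (\<lambda>n. Y n x) t) \<in> borel_measurable N \<and>
         (\<lambda>x. rls_S \<beta> (\<lambda>n. Y n x) t) \<in> borel_measurable N"
  using assms
proof (induction t)
  case 0
  then show ?case by (simp add: rls_theta_def rls_x_def rls_e_def rls_phi_def rls_S_def)
next
  case (Suc t)
  show ?case
  proof (cases t)
    case 0
    then have [measurable]: "Y (Suc 0) \<in> borel_measurable N" using Suc.prems[of 1] by simp
    show ?thesis using 0 by (simp add: rls_theta_def rls_x_def rls_e_def rls_phi_def rls_S_def)
  next
    case (Suc m)
    have "(\<lambda>x. rls_theta \<beta> (\<lambda>n. Y n x) t) \<in> borel_measurable N \<and>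
         (\<lambda>x. rls_x \<beta> (\<lambda>n. Y n x) t) \<in> borel_measurable N \<and>
         (\<lambda>x. rls_e \<beta> (\<lambda>n. Y n x) t) \<in> borel_measurable N \<and>
         (\<lambda>x. rls_phi \<beta> (\<lambda>n. Y n x) t) \<in> borel_measurable N \<and>
         (\<lambda>x. rls_S \<beta> (\<lambda>n. Y n x) t) \<in> borel_measurable N"
      by (rule Suc.IH) (use Suc.prems in auto)
    then have [measurable]:
      "(\<lambda>x. rls_theta \<beta> (\<lambda>n. Y n x) (Suc m)) \<in> borel_measurable N"
      "(\<lambda>x. rls_x \<beta> (\<lambda>n. Y n x) (Suc m)) \<in> borel_measurable N"
      "(\<lambda>x. rls_e \<beta> (\<lambda>n. Y n x) (Suc m)) \<in> borel_measurable N"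
      "(\<lambda>x. rls_phi \<beta> (\<lambda>n. Y n x) (Suc m)) \<in> borel_measurable N"
      "(\<lambda>x. rls_S \<beta> (\<lambda>n. Y n x) (Suc m)) \<in> borel_measurable N"
      unfolding Suc by blast+
    have [measurable]: "Y (Suc (Suc m)) \<in> borel_measurable N"
      using Suc.prems Suc by simp
    have [measurable]: "(\<lambda>x. rls_x \<beta> (\<lambda>n. Y n x) (Suc (Suc m))) \<in> borel_measurable N"
      by (simp only: rls_Suc(1)[OF zero_less_Suc]) measurable
    have [measurable]: "(\<lambda>x. rls_e \<beta> (\<lambda>n. Y n x) (Suc (Suc m))) \<in> borel_measurable N"
      by (simp only: rls_Suc(2)[OF zero_less_Suc]) measurable
    have [measurable]: "(\<lambda>x. rls_phi \<beta> (\<lambda>n. Y n x) (Suc (Suc m))) \<in> borel_measurable N"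
      by (simp only: rls_Suc(3)[OF zero_less_Suc]) measurable
    have "(\<lambda>x. rls_S \<beta> (\<lambda>n. Y n x) (Suc (Suc m))) \<in> borel_measurable N"
      by (simp only: rls_Suc(4)[OF zero_less_Suc]) measurable
    moreover have "(\<lambda>x. rls_theta \<beta> (\<lambda>n. Y n x) (Suc (Suc m))) \<in> borel_measurable N"
      by (simp only: rls_Suc(5)[OF zero_less_Suc]) measurable
    ultimately show ?thesis using Suc by simp
  qed
qed

lemma rls_theta_measurable:
  assumes "\<And>n. 1 \<le> n \<Longrightarrow> n \<le> t \<Longrightarrow> Y n \<in> borel_measurable N"
  shows "(\<lambda>x. rls_theta \<beta> (\<lambda>n. Y n x) t) \<in> borel_measurable N"
  using rls_components_measurable[where Y=Y and t=t and N=N and \<beta>=\<beta>] assms by blast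

lemma rls_error_terms_bounded:
  fixes Y :: "nat \<Rightarrow> real"
  assumes Y: "\<And>n. \<bar>Y n\<bar> \<le> W" and \<theta>: "\<And>n. n \<ge> n0 \<Longrightarrow> \<bar>rls_theta \<beta> Y n\<bar> \<le> k"
    and "k < 1" and \<beta>: "0 \<le> \<beta>" "\<beta> \<le> 1" and "1 \<le> n0"
  shows "\<exists>E P. \<forall>n\<ge>n0. \<bar>rls_e \<beta> Y n\<bar> \<le> E \<and> \<bar>rls_phi \<beta> Y n\<bar> \<le> P"
proof -
  have rec: "rls_x \<beta> Y (Suc n) = Y (Suc n) - \<beta> * rls_theta \<beta> Y n * rls_x \<beta> Y n"
    "rls_e \<beta> Y (Suc n) = Y (Suc n) - rls_theta \<beta> Y n * rls_e \<beta> Y n"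
    "rls_phi \<beta> Y (Suc n) = rls_x \<beta> Y (Suc n) - rls_theta \<beta> Y n * rls_phi \<beta> Y n"
    if "n \<ge> n0" for n
    using that \<open>1 \<le> n0\<close> by (auto simp: rls_Suc)
  have "\<exists>E. \<forall>n\<ge>n0. \<bar>rls_e \<beta> Y n\<bar> \<le> E"
    by (rule stable_recursion_bounded[where w=Y and c="rls_theta \<beta> Y" and W=W and k=k])
      (use Y \<theta> \<open>k < 1\<close> in \<open>auto simp: rec(2)\<close>)
  moreover obtain X where "\<forall>n\<ge>n0. \<bar>rls_x \<beta> Y n\<bar> \<le> X"
  proof -
    have "\<bar>\<beta> * rls_theta \<beta> Y n\<bar> \<le> k" if "n \<ge> n0" for n
      using \<beta> \<theta>[OF that] mult_mono[of \<beta> 1 "\<bar>rls_theta \<beta> Y n\<bar>" k] by (simp add: abs_mult)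
    then have "\<exists>X. \<forall>n\<ge>n0. \<bar>rls_x \<beta> Y n\<bar> \<le> X"
      by (intro stable_recursion_bounded[where w=Y and c="\<lambda>n. \<beta> * rls_theta \<beta> Y n" and W=W and k=k])
        (use Y \<open>k < 1\<close> in \<open>auto simp: rec(1)\<close>)
    then show ?thesis using that by blast
  qed
  then have "\<exists>P. \<forall>n\<ge>n0. \<bar>rls_phi \<beta> Y n\<bar> \<le> P"
    by (intro stable_recursion_bounded[where w="rls_x \<beta> Y" and c="rls_theta \<beta> Y" and W=X and k=k])
      (use \<theta> \<open>k < 1\<close> in \<open>auto simp: rec(3)\<close>)
  ultimately show ?thesis by blast
qed

lemma rls_theta_increments_tendsto_zero:
  fixes Y :: "nat \<Rightarrow> real"
  assumes Y: "\<And>n. \<bar>Y n\<bar> \<le> W" and "Y 1 \<noteq> 0"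
    and \<theta>: "\<And>n. n \<ge> n0 \<Longrightarrow> \<bar>rls_theta \<beta> Y n\<bar> \<le> k" and "k < 1"
    and \<beta>: "0 \<le> \<beta>" "\<beta> \<le> 1" and "1 \<le> n0"
  shows "(\<lambda>n. rls_theta \<beta> Y (Suc n) - rls_theta \<beta> Y n) \<longlonglongrightarrow> 0"
proof -
  obtain E P where EP: "\<And>n. n \<ge> n0 \<Longrightarrow> \<bar>rls_e \<beta> Y n\<bar> \<le> E \<and> \<bar>rls_phi \<beta> Y n\<bar> \<le> P"
    using rls_error_terms_bounded[OF assms(1,3-7)] by blast
  have "(\<lambda>n. rls_phi \<beta> Y (Suc n) / rls_S \<beta> Y (Suc n)) \<longlonglongrightarrow> 0"
  proof (rule bounded_div_cumulative_squares_tendsto_zero)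
    show "rls_S \<beta> Y (Suc (Suc n)) = rls_S \<beta> Y (Suc n) + (rls_phi \<beta> Y (Suc (Suc n)))\<^sup>2" for n
      by (rule rls_Suc(4)) simp
    show "0 < rls_S \<beta> Y (Suc 0)"
      using \<open>Y 1 \<noteq> 0\<close> by (simp add: rls_S_def)
    show "eventually (\<lambda>n. \<bar>rls_phi \<beta> Y (Suc n)\<bar> \<le> P) sequentially"
      using EP by (intro eventually_sequentiallyI[of n0]) auto
  qed
  moreover have "Bseq (\<lambda>n. rls_e \<beta> Y (Suc (Suc n)))"
    using EP by (intro BfunI[where K=E] eventually_sequentiallyI[of n0]) auto
  ultimately have "(\<lambda>n. rls_phi \<beta> Y (Suc n) / rls_S \<beta> Y (Suc n) * rls_e \<beta> Y (Suc (Suc n))) \<longlonglongrightarrow> 0"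
    by (rule tendsto_zero_mult_Bfun)
  then have "(\<lambda>n. rls_theta \<beta> Y (Suc (Suc n)) - rls_theta \<beta> Y (Suc n)) \<longlonglongrightarrow> 0"
    by (simp add: rls_theta_increment del: of_nat_Suc)
  then show ?thesis
    by (rule LIMSEQ_imp_Suc)
qed

section \<open>Dependence of the coefficients on the path of \<open>\<theta>\<close>\<close>

text \<open>The coefficients \<open>\<kappa>\<^sup>x\<^sub>j(t)\<close> and \<open>\<kappa>\<^sup>\<phi>\<^sub>j(t)\<close> only involve \<open>\<theta>\<^sub>r\<close> for \<open>max 1 (t - j) \<le> r < t\<close>.\<close>
definition unit_paths_close :: "nat \<Rightarrow> nat \<Rightarrow> real \<Rightarrow> (nat \<Rightarrow> real) \<Rightarrow> (nat \<Rightarrow> real) \<Rightarrow> bool" where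
  "unit_paths_close t j d th th' \<longleftrightarrow> 0 \<le> d \<and>
     (\<forall>r. 1 \<le> r \<longrightarrow> r < t \<longrightarrow> t \<le> r + j \<longrightarrow> \<bar>th r\<bar> \<le> 1 \<and> \<bar>th' r\<bar> \<le> 1 \<and> \<bar>th r - th' r\<bar> \<le> d)"

lemma kappa_x_bounded_lipschitz:
  assumes \<beta>: "0 \<le> \<beta>" "\<beta> \<le> 1" and close: "unit_paths_close t j d th th'"
  shows "\<bar>kappa_x \<beta> \<kappa> th t j\<bar> \<le> (\<Sum>l=0..j. \<bar>\<kappa> l\<bar>)"
    and "\<bar>kappa_x \<beta> \<kappa> th t j - kappa_x \<beta> \<kappa> th' t j\<bar> \<le> real j * d * (\<Sum>l=0..j. \<bar>\<kappa> l\<bar>)"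
proof -
  let ?L = "{0..min j (t - 1)}" and ?P = "\<lambda>th l. \<Prod>i = 1..l. th (t - i)"
  have unit: "\<bar>th (t - i)\<bar> \<le> 1" "\<bar>th' (t - i)\<bar> \<le> 1" "\<bar>th (t - i) - th' (t - i)\<bar> \<le> d"
    if "l \<in> ?L" "i \<in> {1..l}" for i l
    using close that unfolding unit_paths_close_def by (auto dest!: spec[of _ "t - i"])
  have prod_le: "\<bar>?P th l\<bar> \<le> 1" if "l \<in> ?L" for l
    unfolding abs_prod using unit(1)[OF that] by (intro prod_le_1) auto
  have prod_diff_le: "\<bar>?P th l - ?P th' l\<bar> \<le> real j * d" if "l \<in> ?L" for l
  proof -
    have "\<bar>?P th l - ?P th' l\<bar> \<le> (\<Sum>i = 1..l. \<bar>th (t - i) - th' (t - i)\<bar>)"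
      using norm_prod_diff[of "{1..l}" "\<lambda>i. th (t - i)" "\<lambda>i. th' (t - i)"] unit[OF that] by simp
    also have "\<dots> \<le> real l * d"
      using sum_mono[of "{1..l}" _ "\<lambda>_. d"] unit(3)[OF that] by simp
    also have "\<dots> \<le> real j * d"
      using that close by (intro mult_right_mono) (auto simp: unit_paths_close_def)
    finally show ?thesis .
  qed
  have beta_pow: "\<bar>(-\<beta>) ^ l\<bar> \<le> 1" for l
    using \<beta> by (simp add: power_abs power_le_one)
  have kappa_sum: "(\<Sum>l\<in>?L. \<bar>\<kappa> (j - l)\<bar>) \<le> (\<Sum>l=0..j. \<bar>\<kappa> l\<bar>)"
  proof -
    have "(\<Sum>l\<in>?L. \<bar>\<kappa> (j - l)\<bar>) \<le> (\<Sum>l=0..j. \<bar>\<kappa> (j - l)\<bar>)"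
      by (intro sum_mono2) auto
    also have "\<dots> = (\<Sum>l=0..j. \<bar>\<kappa> l\<bar>)"
      by (subst sum.atLeastAtMost_rev) simp
    finally show ?thesis .
  qed
  have "\<bar>kappa_x \<beta> \<kappa> th t j\<bar> \<le> (\<Sum>l\<in>?L. \<bar>(-\<beta>) ^ l\<bar> * \<bar>\<kappa> (j - l)\<bar> * \<bar>?P th l\<bar>)"
    unfolding kappa_x_def abs_mult[symmetric] by (rule sum_abs)
  also have "\<dots> \<le> (\<Sum>l\<in>?L. 1 * \<bar>\<kappa> (j - l)\<bar> * 1)"
    using beta_pow prod_le by (intro sum_mono mult_mono) auto
  finally show "\<bar>kappa_x \<beta> \<kappa> th t j\<bar> \<le> (\<Sum>l=0..j. \<bar>\<kappa> l\<bar>)"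
    using kappa_sum by simp
  have "\<bar>kappa_x \<beta> \<kappa> th t j - kappa_x \<beta> \<kappa> th' t j\<bar>
      = \<bar>\<Sum>l\<in>?L. (-\<beta>) ^ l * \<kappa> (j - l) * (?P th l - ?P th' l)\<bar>"
    unfolding kappa_x_def by (simp add: sum_subtractf[symmetric] algebra_simps)
  also have "\<dots> \<le> (\<Sum>l\<in>?L. \<bar>(-\<beta>) ^ l\<bar> * \<bar>\<kappa> (j - l)\<bar> * \<bar>?P th l - ?P th' l\<bar>)"
    unfolding abs_mult[symmetric] by (rule sum_abs)
  also have "\<dots> \<le> (\<Sum>l\<in>?L. 1 * \<bar>\<kappa> (j - l)\<bar> * (real j * d))"
    using beta_pow prod_diff_le by (intro sum_mono mult_mono) auto
  also have "\<dots> = real j * d * (\<Sum>l\<in>?L. \<bar>\<kappa> (j - l)\<bar>)"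
    by (simp add: sum_distrib_left algebra_simps)
  also have "\<dots> \<le> real j * d * (\<Sum>l=0..j. \<bar>\<kappa> l\<bar>)"
    using kappa_sum close by (intro mult_left_mono) (auto simp: unit_paths_close_def)
  finally show "\<bar>kappa_x \<beta> \<kappa> th t j - kappa_x \<beta> \<kappa> th' t j\<bar> \<le> real j * d * (\<Sum>l=0..j. \<bar>\<kappa> l\<bar>)" .
qed

lemma kappa_phi_0: "kappa_phi \<beta> \<kappa> th t 0 = (if t = 0 then 0 else \<kappa> 0)"
proof (cases t)
  case (Suc n)
  then show ?thesis by (cases n) (simp_all add: kappa_x_def)
qed simp

lemma unit_paths_close_kappa_phi_step:
  assumes "unit_paths_close (Suc (Suc m)) (Suc j) d th th'"
  shows "unit_paths_close (Suc m) j d th th'"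
    and "unit_paths_close (Suc m) j 0 th' th'"
    and "\<bar>th (Suc m)\<bar> \<le> 1" "\<bar>th' (Suc m)\<bar> \<le> 1" "\<bar>th (Suc m) - th' (Suc m)\<bar> \<le> d"
  using assms by (auto simp: unit_paths_close_def)

lemma kappa_phi_Suc_bounded_lipschitz:
  assumes \<beta>: "0 \<le> \<beta>" "\<beta> \<le> 1"
    and bounds: "\<And>t th th' d. unit_paths_close t j d th th' \<Longrightarrow>
      \<bar>kappa_phi \<beta> \<kappa> th t j\<bar> \<le> B \<and> \<bar>kappa_phi \<beta> \<kappa> th t j - kappa_phi \<beta> \<kappa> th' t j\<bar> \<le> C * d"
    and close: "unit_paths_close t (Suc j) d th th'"
  shows "\<bar>kappa_phi \<beta> \<kappa> th t (Suc j)\<bar> \<le> \<bar>\<kappa> (Suc j)\<bar> + (\<Sum>l=0..Suc j. \<bar>\<kappa> l\<bar>) + B \<and>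
    \<bar>kappa_phi \<beta> \<kappa> th t (Suc j) - kappa_phi \<beta> \<kappa> th' t (Suc j)\<bar>
      \<le> (real (Suc j) * (\<Sum>l=0..Suc j. \<bar>\<kappa> l\<bar>) + C + B) * d"
proof -
  define K where "K = (\<Sum>l=0..Suc j. \<bar>\<kappa> l\<bar>)"
  have "0 \<le> K" unfolding K_def by (intro sum_nonneg) auto
  have "unit_paths_close 0 j 0 th th" "unit_paths_close 1 j 1 th th" for th
    by (auto simp: unit_paths_close_def)
  then have "0 \<le> B" "0 \<le> C"
    using bounds by (metis abs_ge_zero kappa_phi.simps(1) order_trans, metis abs_ge_zero mult.right_neutral order_trans)
  have "\<bar>kappa_phi \<beta> \<kappa> th t (Suc j)\<bar> \<le> \<bar>\<kappa> (Suc j)\<bar> + K + B \<and>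
      \<bar>kappa_phi \<beta> \<kappa> th t (Suc j) - kappa_phi \<beta> \<kappa> th' t (Suc j)\<bar> \<le> (real (Suc j) * K + C + B) * d"
  proof (cases "t \<le> 1")
    case True
    have "0 \<le> (real (Suc j) * K + C + B) * d"
      using \<open>0 \<le> K\<close> \<open>0 \<le> B\<close> \<open>0 \<le> C\<close> close by (simp add: unit_paths_close_def)
    with True show ?thesis
      using \<open>0 \<le> K\<close> \<open>0 \<le> B\<close> by (cases t) auto
  next
    case False
    then obtain m where Suc_Suc: "t = Suc (Suc m)"
      by (auto simp: not_le dest!: less_imp_Suc_add)
    let ?a = "kappa_phi \<beta> \<kappa> th (Suc m) j" and ?a' = "kappa_phi \<beta> \<kappa> th' (Suc m) j"
    note step = unit_paths_close_kappa_phi_step[OF close[unfolded Suc_Suc]]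
    have a: "\<bar>?a\<bar> \<le> B" "\<bar>?a'\<bar> \<le> B" "\<bar>?a - ?a'\<bar> \<le> C * d"
      using bounds[OF step(1)] bounds[OF step(2)] by auto
    note kx = kappa_x_bounded_lipschitz[where \<kappa>=\<kappa>, OF \<beta> close, folded K_def]
    have "\<bar>th (Suc m) * ?a\<bar> \<le> 1 * B"
      unfolding abs_mult using step a \<open>0 \<le> B\<close> by (intro mult_mono) auto
    then have bound: "\<bar>kappa_phi \<beta> \<kappa> th t (Suc j)\<bar> \<le> \<bar>\<kappa> (Suc j)\<bar> + K + B"
      using kx(1) abs_triangle_ineq4[of "kappa_x \<beta> \<kappa> th t (Suc j)" "th (Suc m) * ?a"]
      unfolding Suc_Suc kappa_phi.simps by linarith
    have "\<bar>th (Suc m) * ?a - th' (Suc m) * ?a'\<bar>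
        = \<bar>th (Suc m) * (?a - ?a') + (th (Suc m) - th' (Suc m)) * ?a'\<bar>"
      by (simp add: algebra_simps)
    also have "\<dots> \<le> \<bar>th (Suc m)\<bar> * \<bar>?a - ?a'\<bar> + \<bar>th (Suc m) - th' (Suc m)\<bar> * \<bar>?a'\<bar>"
      unfolding abs_mult[symmetric] by (rule abs_triangle_ineq)
    also have "\<dots> \<le> 1 * (C * d) + d * B"
      using step a by (intro add_mono mult_mono) auto
    finally have theta_a: "\<bar>th (Suc m) * ?a - th' (Suc m) * ?a'\<bar> \<le> C * d + d * B"
      by simp
    have "\<bar>kappa_phi \<beta> \<kappa> th t (Suc j) - kappa_phi \<beta> \<kappa> th' t (Suc j)\<bar>
        = \<bar>(kappa_x \<beta> \<kappa> th t (Suc j) - kappa_x \<beta> \<kappa> th' t (Suc j))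
            - (th (Suc m) * ?a - th' (Suc m) * ?a')\<bar>"
      unfolding Suc_Suc kappa_phi.simps by (simp add: algebra_simps)
    also have "\<dots> \<le> real (Suc j) * d * K + (C * d + d * B)"
      using kx(2) theta_a abs_triangle_ineq4 order_trans add_mono by metis
    finally show ?thesis
      using bound by (simp add: algebra_simps)
  qed
  then show ?thesis
    unfolding K_def .
qed

lemma kappa_phi_bounded_lipschitz:
  assumes \<beta>: "0 \<le> \<beta>" "\<beta> \<le> 1"
  shows "\<exists>B C. \<forall>t th th' d. unit_paths_close t j d th th' \<longrightarrow>
    \<bar>kappa_phi \<beta> \<kappa> th t j\<bar> \<le> B \<and> \<bar>kappa_phi \<beta> \<kappa> th t j - kappa_phi \<beta> \<kappa> th' t j\<bar> \<le> C * d"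
proof (induction j)
  case 0
  show ?case
    by (rule exI[of _ "\<bar>\<kappa> 0\<bar>"], rule exI[of _ 0]) (simp add: kappa_phi_0)
next
  case (Suc j)
  then obtain B C where "\<And>t th th' d. unit_paths_close t j d th th' \<Longrightarrow>
    \<bar>kappa_phi \<beta> \<kappa> th t j\<bar> \<le> B \<and> \<bar>kappa_phi \<beta> \<kappa> th t j - kappa_phi \<beta> \<kappa> th' t j\<bar> \<le> C * d"
    by blast
  from kappa_phi_Suc_bounded_lipschitz[OF \<beta> this] show ?case
    by blast
qed

text \<open>Freezing \<open>\<theta>\<close> at time \<open>s - L\<close> makes \<open>\<kappa>\<^sup>\<phi>\<^sub>j(s)\<close> known one step before \<open>\<epsilon>\<^sub>s\<^sub>-\<^sub>j\<close> when \<open>j < L\<close>;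
  clipping makes it bounded uniformly in \<open>s\<close> and in the path.\<close>
definition kappa_phi_frozen :: "real \<Rightarrow> (nat \<Rightarrow> real) \<Rightarrow> nat \<Rightarrow> (nat \<Rightarrow> real) \<Rightarrow> nat \<Rightarrow> nat \<Rightarrow> real" where
  "kappa_phi_frozen \<beta> \<kappa> L th s j = kappa_phi \<beta> \<kappa> (\<lambda>_. clip 1 (th (s - L))) s j"

lemma kappa_phi_frozen_bounded:
  assumes "0 \<le> \<beta>" "\<beta> \<le> 1"
  shows "\<exists>B. \<forall>j s th. \<bar>kappa_phi_frozen \<beta> \<kappa> L th s j\<bar> \<le> B j"
proof -
  have "\<exists>B. \<forall>s th. \<bar>kappa_phi_frozen \<beta> \<kappa> L th s j\<bar> \<le> B" for j
  proof -
    obtain B C where "\<And>t th th' d. unit_paths_close t j d th th' \<Longrightarrow> \<bar>kappa_phi \<beta> \<kappa> th t j\<bar> \<le> B"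
      using kappa_phi_bounded_lipschitz[OF assms, of j \<kappa>] by blast
    moreover have "unit_paths_close s j 0 (\<lambda>_. clip 1 c) (\<lambda>_. clip 1 c)" for s c
      using abs_clip_le[of 1 c] by (auto simp: unit_paths_close_def)
    ultimately show ?thesis
      unfolding kappa_phi_frozen_def by blast
  qed
  then show ?thesis by metis
qed

lemma shifted_diff_tendsto_zero:
  fixes f :: "nat \<Rightarrow> real"
  assumes "(\<lambda>n. f (Suc n) - f n) \<longlonglongrightarrow> 0"
  shows "(\<lambda>n. f (n + g) - f n) \<longlonglongrightarrow> 0"
proof (induction g)
  case (Suc g)
  have "(\<lambda>n. f (Suc (n + g)) - f (n + g)) \<longlonglongrightarrow> 0"
    using LIMSEQ_ignore_initial_segment[OF assms, of g] by simp
  from tendsto_add[OF Suc.IH this] show ?case by simp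
qed simp

lemma kappa_phi_sub_frozen_tendsto_zero:
  assumes \<beta>: "0 \<le> \<beta>" "\<beta> \<le> 1"
    and increments: "(\<lambda>n. th (Suc n) - th n) \<longlonglongrightarrow> 0"
    and th_bounded: "\<And>n. n \<ge> n0 \<Longrightarrow> \<bar>th n\<bar> \<le> 1" and "j < L"
  shows "(\<lambda>s. kappa_phi \<beta> \<kappa> th s j - kappa_phi_frozen \<beta> \<kappa> L th s j) \<longlonglongrightarrow> 0"
proof -
  obtain B C where BC: "\<And>t th th' d. unit_paths_close t j d th th' \<Longrightarrow>
      \<bar>kappa_phi \<beta> \<kappa> th t j - kappa_phi \<beta> \<kappa> th' t j\<bar> \<le> C * d"
    using kappa_phi_bounded_lipschitz[OF \<beta>, of j \<kappa>] by blast
  define d where "d s = (\<Sum>i=1..L. \<bar>th (s - i) - th (s - L)\<bar>)" for s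
  have "d \<longlonglongrightarrow> (\<Sum>i=1..L. 0)"
    unfolding d_def
  proof (intro tendsto_sum)
    fix i assume i: "i \<in> {1..L}"
    have "(\<lambda>m. th (m + (L - i)) - th m) \<longlonglongrightarrow> 0"
      by (rule shifted_diff_tendsto_zero[OF increments])
    then have "(\<lambda>m. th (m + L - i) - th (m + L - L)) \<longlonglongrightarrow> 0"
      using i by simp
    then show "(\<lambda>s. \<bar>th (s - i) - th (s - L)\<bar>) \<longlonglongrightarrow> 0"
      by (subst tendsto_rabs_zero_iff) (rule LIMSEQ_offset)
  qed
  then have "(\<lambda>s. C * d s) \<longlonglongrightarrow> 0"
    by (simp add: tendsto_mult_right_zero)
  moreover have "unit_paths_close s j (d s) th (\<lambda>_. clip 1 (th (s - L)))"
    if s: "s \<ge> n0 + L" for s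
  proof -
    have member: "\<bar>th (s - i) - th (s - L)\<bar> \<le> d s" if "i \<in> {1..L}" for i
      unfolding d_def by (rule member_le_sum[OF that]) auto
    have "\<bar>th r - th (s - L)\<bar> \<le> d s" if "r < s" "s \<le> r + j" for r
    proof -
      have "s - r \<in> {1..L}" using that \<open>j < L\<close> by auto
      from member[OF this] show ?thesis using \<open>r < s\<close> by simp
    qed
    moreover have "\<bar>th r\<bar> \<le> 1" if "r < s" "s \<le> r + j" for r
      using that s \<open>j < L\<close> by (intro th_bounded) auto
    moreover have "\<bar>th (s - L)\<bar> \<le> 1"
      using s by (intro th_bounded) auto
    moreover have "0 \<le> d s"
      unfolding d_def by (intro sum_nonneg) auto
    ultimately show ?thesis
      unfolding unit_paths_close_def by (auto simp: clip_eq_self)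
  qed
  then have "eventually (\<lambda>s. norm (kappa_phi \<beta> \<kappa> th s j - kappa_phi_frozen \<beta> \<kappa> L th s j) \<le> C * d s)
      sequentially"
    unfolding kappa_phi_frozen_def real_norm_def by (intro eventually_sequentiallyI[of "n0 + L"] BC)
  ultimately show ?thesis
    by (rule Lim_null_comparison[rotated])
qed

lemma kappa_phi_const_measurable:
  assumes [measurable]: "f \<in> borel_measurable N"
  shows "(\<lambda>x. kappa_phi \<beta> \<kappa> (\<lambda>_. f x) s j) \<in> borel_measurable N"
proof (induction s arbitrary: j)
  case (Suc s)
  note IH = Suc.IH
  have [measurable]: "(\<lambda>x. kappa_x \<beta> \<kappa> (\<lambda>_. f x) t i) \<in> borel_measurable N" for t i
    unfolding kappa_x_def by measurable
  show ?case
  proof (cases s)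
    case (Suc n)
    show ?thesis
    proof (cases j)
      case (Suc i)
      note [measurable] = IH[of i, unfolded \<open>s = Suc n\<close>]
      show ?thesis using \<open>s = Suc n\<close> Suc by simp
    qed (simp add: \<open>s = Suc n\<close>)
  qed simp
qed simp

lemma kappa_phi_frozen_measurable:
  assumes "(\<lambda>x. th x (s - L)) \<in> borel_measurable N"
  shows "(\<lambda>x. kappa_phi_frozen \<beta> \<kappa> L (th x) s j) \<in> borel_measurable N"
  unfolding kappa_phi_frozen_def
  by (intro kappa_phi_const_measurable borel_measurable_clip assms)

section \<open>Cesaro means of centred squares\<close>

definition quadratic_deviation :: "real \<Rightarrow> nat \<Rightarrow> (int \<Rightarrow> real) \<Rightarrow> (nat \<Rightarrow> nat \<Rightarrow> real) \<Rightarrow> nat \<Rightarrow> real" where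
  "quadratic_deviation \<sigma>2 u E c s =
     (\<Sum>j=0..u. c s j * E (int s - int j))\<^sup>2 - \<sigma>2 * (\<Sum>j=0..u. (c s j)\<^sup>2)"

lemma quadratic_deviation_eq:
  "quadratic_deviation \<sigma>2 u E c s =
     (\<Sum>j=0..u. (c s j)\<^sup>2 * ((E (int s - int j))\<^sup>2 - \<sigma>2))
     + 2 * (\<Sum>k=0..u. \<Sum>j<k. c s j * c s k * E (int s - int k) * E (int s - int j))"
  unfolding quadratic_deviation_def square_sum_eq
  by (simp add: sum_subtractf sum_distrib_left power_mult_distrib algebra_simps)

lemma cesaro_quadratic_deviation_eq:
  "(1 / real t) * (\<Sum>s=1..t. quadratic_deviation \<sigma>2 u E c s) =
     (1 / real t) * (\<Sum>s=1..t. (\<Sum>j=0..u. c s j * E (int s - int j))\<^sup>2)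
     - (\<sigma>2 / real t) * (\<Sum>s=1..t. \<Sum>j=0..u. (c s j)\<^sup>2)"
  unfolding quadratic_deviation_def
  by (simp add: sum_subtractf sum_distrib_left[symmetric] right_diff_distrib)

lemma cesaro_quadratic_deviation_tendsto_zero:
  fixes c :: "nat \<Rightarrow> nat \<Rightarrow> real" and E :: "int \<Rightarrow> real"
  assumes diagonal: "\<And>j. j \<le> u \<Longrightarrow>
      (\<lambda>t. (1 / real t) * (\<Sum>s=1..t. (c s j)\<^sup>2 * ((E (int s - int j))\<^sup>2 - \<sigma>2))) \<longlonglongrightarrow> 0"
    and off_diagonal: "\<And>j k. j < k \<Longrightarrow> k \<le> u \<Longrightarrow>
      (\<lambda>t. (1 / real t) * (\<Sum>s=1..t. c s j * c s k * E (int s - int k) * E (int s - int j))) \<longlonglongrightarrow> 0"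
  shows "(\<lambda>t. (1 / real t) * (\<Sum>s=1..t. quadratic_deviation \<sigma>2 u E c s)) \<longlonglongrightarrow> 0"
proof -
  define F where "F s j = (c s j)\<^sup>2 * ((E (int s - int j))\<^sup>2 - \<sigma>2)" for s j
  define G where "G s j k = c s j * c s k * E (int s - int k) * E (int s - int j)" for s j k
  have "(\<Sum>s=1..t. \<Sum>k=0..u. \<Sum>j<k. G s j k) = (\<Sum>k=0..u. \<Sum>s=1..t. \<Sum>j<k. G s j k)" for t
    by (rule sum.swap)
  also have "\<dots> t = (\<Sum>k=0..u. \<Sum>j<k. \<Sum>s=1..t. G s j k)" for t
    by (intro sum.cong refl sum.swap)
  finally have swap_G: "(\<Sum>s=1..t. \<Sum>k=0..u. \<Sum>j<k. G s j k) = (\<Sum>k=0..u. \<Sum>j<k. \<Sum>s=1..t. G s j k)" for t .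
  have "(\<Sum>s=1..t. quadratic_deviation \<sigma>2 u E c s) =
      (\<Sum>s=1..t. \<Sum>j=0..u. F s j) + 2 * (\<Sum>s=1..t. \<Sum>k=0..u. \<Sum>j<k. G s j k)" for t
    unfolding quadratic_deviation_eq F_def G_def by (simp add: sum.distrib sum_distrib_left)
  also have "\<dots> t = (\<Sum>j=0..u. \<Sum>s=1..t. F s j) + 2 * (\<Sum>k=0..u. \<Sum>j<k. \<Sum>s=1..t. G s j k)" for t
    unfolding swap_G by (subst sum.swap[of F]) (rule refl)
  finally have "(1 / real t) * (\<Sum>s=1..t. quadratic_deviation \<sigma>2 u E c s) =
      (\<Sum>j=0..u. (1 / real t) * (\<Sum>s=1..t. F s j))
      + 2 * (\<Sum>k=0..u. \<Sum>j<k. (1 / real t) * (\<Sum>s=1..t. G s j k))" for t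
    by (simp add: sum_distrib_left distrib_left mult.left_commute)
  moreover have "(\<lambda>t. (\<Sum>j=0..u. (1 / real t) * (\<Sum>s=1..t. F s j))
      + 2 * (\<Sum>k=0..u. \<Sum>j<k. (1 / real t) * (\<Sum>s=1..t. G s j k)))
      \<longlonglongrightarrow> (\<Sum>j=0..u. 0) + 2 * (\<Sum>k=0..u. \<Sum>j<k. 0)"
    unfolding F_def G_def by (intro tendsto_add tendsto_mult tendsto_const tendsto_sum diagonal off_diagonal) auto
  ultimately show ?thesis by simp
qed

lemma quadratic_deviation_perturbation:
  fixes a c :: "nat \<Rightarrow> nat \<Rightarrow> real" and E :: "int \<Rightarrow> real"
  assumes close: "\<And>j. j \<le> u \<Longrightarrow> (\<lambda>s. a s j - c s j) \<longlonglongrightarrow> 0"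
    and c_bounded: "\<And>s j. \<bar>c s j\<bar> \<le> B j"
    and E_bounded: "\<And>i. \<bar>E i\<bar> \<le> K"
  shows "(\<lambda>s. quadratic_deviation \<sigma>2 u E a s - quadratic_deviation \<sigma>2 u E c s) \<longlonglongrightarrow> 0"
proof -
  have B_nonneg: "0 \<le> B j" for j
    using c_bounded[of 0 j] by (meson abs_ge_zero order_trans)
  have c_Bseq: "Bseq (\<lambda>s. c s j)" for j
    using c_bounded by (intro BseqI'[where K="B j"]) simp
  have E_Bseq: "Bseq (\<lambda>s. E (int s - int j))" for j
    using E_bounded by (intro BseqI'[where K=K]) simp
  have "(\<lambda>s. \<Sum>j=0..u. (a s j - c s j) * E (int s - int j)) \<longlonglongrightarrow> (\<Sum>j=0..u. 0)"
    by (intro tendsto_sum tendsto_zero_mult_Bfun close E_Bseq) auto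
  then have "(\<lambda>s. (\<Sum>j=0..u. a s j * E (int s - int j)) - (\<Sum>j=0..u. c s j * E (int s - int j))) \<longlonglongrightarrow> 0"
    by (simp add: sum_subtractf[symmetric] algebra_simps)
  moreover have "Bseq (\<lambda>s. \<Sum>j=0..u. c s j * E (int s - int j))"
  proof (rule BseqI'[where K="\<Sum>j=0..u. B j * K"])
    show "norm (\<Sum>j=0..u. c s j * E (int s - int j)) \<le> (\<Sum>j=0..u. B j * K)" for s
      unfolding real_norm_def
      by (rule order_trans[OF sum_abs sum_mono])
        (auto simp: abs_mult intro!: mult_mono c_bounded E_bounded B_nonneg)
  qed
  ultimately have linear: "(\<lambda>s. (\<Sum>j=0..u. a s j * E (int s - int j))\<^sup>2 - (\<Sum>j=0..u. c s j * E (int s - int j))\<^sup>2)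
      \<longlonglongrightarrow> 0"
    by (rule square_diff_tendsto_zero)
  have "(\<lambda>s. \<Sum>j=0..u. (a s j)\<^sup>2 - (c s j)\<^sup>2) \<longlonglongrightarrow> (\<Sum>j=0..u. 0)"
    by (intro tendsto_sum square_diff_tendsto_zero close c_Bseq) auto
  then have squares: "(\<lambda>s. (\<Sum>j=0..u. (a s j)\<^sup>2) - (\<Sum>j=0..u. (c s j)\<^sup>2)) \<longlonglongrightarrow> 0"
    by (simp add: sum_subtractf)
  have "(\<lambda>s. ((\<Sum>j=0..u. a s j * E (int s - int j))\<^sup>2 - (\<Sum>j=0..u. c s j * E (int s - int j))\<^sup>2)
      - \<sigma>2 * ((\<Sum>j=0..u. (a s j)\<^sup>2) - (\<Sum>j=0..u. (c s j)\<^sup>2))) \<longlonglongrightarrow> 0 - \<sigma>2 * 0"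
    by (intro tendsto_diff tendsto_mult tendsto_const linear squares)
  then show ?thesis
    by (simp add: quadratic_deviation_def algebra_simps)
qed

lemma cesaro_quadratic_deviation_kappa_phi:
  fixes \<beta> :: real and \<kappa> th :: "nat \<Rightarrow> real" and E :: "int \<Rightarrow> real" and u :: nat
  defines "c \<equiv> kappa_phi_frozen \<beta> \<kappa> (Suc u) th"
  assumes \<beta>: "0 \<le> \<beta>" "\<beta> \<le> 1"
    and increments: "(\<lambda>n. th (Suc n) - th n) \<longlonglongrightarrow> 0"
    and th_bounded: "\<And>n. n \<ge> n0 \<Longrightarrow> \<bar>th n\<bar> \<le> 1"
    and E_bounded: "\<And>i. \<bar>E i\<bar> \<le> K"
    and diagonal: "\<And>j. j \<le> u \<Longrightarrow>
      (\<lambda>t. (1 / real t) * (\<Sum>s=1..t. (c s j)\<^sup>2 * ((E (int s - int j))\<^sup>2 - \<sigma>2))) \<longlonglongrightarrow> 0"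
    and off_diagonal: "\<And>j k. j < k \<Longrightarrow> k \<le> u \<Longrightarrow>
      (\<lambda>t. (1 / real t) * (\<Sum>s=1..t. c s j * c s k * E (int s - int k) * E (int s - int j))) \<longlonglongrightarrow> 0"
  shows "(\<lambda>t. (1 / real t) * (\<Sum>s=1..t. quadratic_deviation \<sigma>2 u E (kappa_phi \<beta> \<kappa> th) s)) \<longlonglongrightarrow> 0"
proof -
  obtain B where "\<And>s j. \<bar>c s j\<bar> \<le> B j"
    using kappa_phi_frozen_bounded[OF \<beta>] unfolding c_def by blast
  moreover have "(\<lambda>s. kappa_phi \<beta> \<kappa> th s j - c s j) \<longlonglongrightarrow> 0" if "j \<le> u" for j
    unfolding c_def using that by (intro kappa_phi_sub_frozen_tendsto_zero[OF \<beta> increments th_bounded]) auto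
  ultimately have "(\<lambda>s. quadratic_deviation \<sigma>2 u E (kappa_phi \<beta> \<kappa> th) s - quadratic_deviation \<sigma>2 u E c s) \<longlonglongrightarrow> 0"
    using E_bounded by (intro quadratic_deviation_perturbation)
  from tendsto_add[OF cesaro_mean_tendsto_zero[OF this]
      cesaro_quadratic_deviation_tendsto_zero[of u c E \<sigma>2, OF diagonal off_diagonal]]
  have "(\<lambda>t. (1 / real t) * (\<Sum>s=1..t. quadratic_deviation \<sigma>2 u E (kappa_phi \<beta> \<kappa> th) s
      - quadratic_deviation \<sigma>2 u E c s) + (1 / real t) * (\<Sum>s=1..t. quadratic_deviation \<sigma>2 u E c s)) \<longlonglongrightarrow> 0"
    by simp
  then show ?thesis
    by (simp add: sum_subtractf algebra_simps)
qed

lemma cesaro_quadratic_deviation_rls: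
  fixes \<beta> :: real and \<kappa> Y :: "nat \<Rightarrow> real" and E :: "int \<Rightarrow> real" and u :: nat
  defines "c \<equiv> kappa_phi_frozen \<beta> \<kappa> (Suc u) (rls_theta \<beta> Y)"
  assumes \<beta>: "0 \<le> \<beta>" "\<beta> \<le> 1"
    and Y: "\<And>n. \<bar>Y n\<bar> \<le> W" "Y 1 \<noteq> 0"
    and \<theta>: "\<And>n. n \<ge> n0 \<Longrightarrow> \<bar>rls_theta \<beta> Y n\<bar> \<le> k" "k < 1" "1 \<le> n0"
    and E_bounded: "\<And>i. \<bar>E i\<bar> \<le> K"
    and diagonal: "\<And>j. j \<le> u \<Longrightarrow>
      (\<lambda>t. (1 / real t) * (\<Sum>s=1..t. (c s j)\<^sup>2 * ((E (int s - int j))\<^sup>2 - \<sigma>2))) \<longlonglongrightarrow> 0"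
    and off_diagonal: "\<And>j k. j < k \<Longrightarrow> k \<le> u \<Longrightarrow>
      (\<lambda>t. (1 / real t) * (\<Sum>s=1..t. c s j * c s k * E (int s - int k) * E (int s - int j))) \<longlonglongrightarrow> 0"
  shows "(\<lambda>t. (1 / real t) * (\<Sum>s=1..t. quadratic_deviation \<sigma>2 u E (kappa_phi \<beta> \<kappa> (rls_theta \<beta> Y)) s))
    \<longlonglongrightarrow> 0"
proof (rule cesaro_quadratic_deviation_kappa_phi[OF \<beta> _ _ E_bounded diagonal[unfolded c_def] off_diagonal[unfolded c_def]])
  show "(\<lambda>n. rls_theta \<beta> Y (Suc n) - rls_theta \<beta> Y n) \<longlonglongrightarrow> 0"
    by (rule rls_theta_increments_tendsto_zero[OF Y \<theta>(1,2) \<beta> \<theta>(3)])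
  show "\<bar>rls_theta \<beta> Y n\<bar> \<le> 1" if "n \<ge> n0" for n
    using \<theta>(1)[OF that] \<theta>(2) by simp
qed

section \<open>Innovations and the natural filtration\<close>

lemma
  fixes M :: "'a measure" and y :: "int \<Rightarrow> 'a \<Rightarrow> real"
  shows space_nat_filtration [simp]: "space (nat_filtration M y i) = space M"
    and sets_nat_filtration:
      "sets (nat_filtration M y i) = sigma_sets (space M) {y s -` A \<inter> space M | s A. s \<le> i \<and> A \<in> sets borel}"
  unfolding nat_filtration_def by (auto intro!: space_measure_of sets_measure_of)

lemma nat_filtration_mono: "i \<le> i' \<Longrightarrow> sets (nat_filtration M y i) \<subseteq> sets (nat_filtration M y i')"
  unfolding sets_nat_filtration by (intro sigma_sets_mono') (auto intro: order_trans)

lemma subalgebra_nat_filtration: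
  assumes "\<And>t. y t \<in> borel_measurable M"
  shows "subalgebra M (nat_filtration M y i)"
proof -
  have "{y s -` A \<inter> space M | s A. s \<le> i \<and> A \<in> sets borel} \<subseteq> sets M"
    using assms by (auto simp: measurable_sets)
  then have "sigma_sets (space M) {y s -` A \<inter> space M | s A. s \<le> i \<and> A \<in> sets borel} \<subseteq> sets M"
    by (rule sets.sigma_sets_subset)
  then show ?thesis
    unfolding subalgebra_def sets_nat_filtration by simp
qed

lemma measurable_nat_filtration:
  assumes "s \<le> i"
  shows "y s \<in> borel_measurable (nat_filtration M y i)"
proof (rule measurableI)
  fix A :: "real set" assume "A \<in> sets borel"
  then show "y s -` A \<inter> space (nat_filtration M y i) \<in> sets (nat_filtration M y i)"
    using assms unfolding sets_nat_filtration by auto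
qed simp

lemma rls_theta_nat_filtration_measurable:
  assumes "t = 0 \<or> int t \<le> i"
  shows "(\<lambda>x. rls_theta \<beta> (\<lambda>n. y (int n) x) t) \<in> borel_measurable (nat_filtration M y i)"
proof (cases "t = 0")
  case False
  then show ?thesis
    using assms by (intro rls_theta_measurable measurable_nat_filtration) auto
qed (simp add: rls_initial)

text \<open>Clipping at the almost sure bound \<open>K\<close> makes the innovations bounded everywhere
  without changing them on a set of full measure.\<close>
lemma (in prob_space) clipped_martingale_difference_orthogonal:
  assumes subalgebra: "subalgebra M F" and \<epsilon>: "\<epsilon> \<in> borel_measurable M" "integrable M \<epsilon>"
    and cond_exp: "AE x in M. real_cond_exp M F \<epsilon> x = 0"
    and cond_var: "AE x in M. real_cond_exp M F (\<lambda>x. (\<epsilon> x)\<^sup>2) x = \<sigma>2"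
    and \<epsilon>_bounded: "AE x in M. \<bar>\<epsilon> x\<bar> \<le> K"
    and Z: "Z \<in> borel_measurable F" "\<And>x. x \<in> space M \<Longrightarrow> \<bar>Z x\<bar> \<le> C"
  shows "(\<integral>x. Z x * clip K (\<epsilon> x) \<partial>M) = 0"
    and "(\<integral>x. Z x * ((clip K (\<epsilon> x))\<^sup>2 - \<sigma>2) \<partial>M) = 0"
proof -
  have clip_AE: "AE x in M. clip K (\<epsilon> x) = \<epsilon> x"
    using \<epsilon>_bounded by (auto intro: clip_eq_self)
  have [measurable]: "Z \<in> borel_measurable M" "\<epsilon> \<in> borel_measurable M"
    using measurable_from_subalg[OF subalgebra Z(1)] \<epsilon>(1) .
  have Z_le: "\<bar>Z x\<bar> \<le> \<bar>C\<bar>" if "x \<in> space M" for x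
    using Z(2)[OF that] by linarith
  have int_Z: "integrable M Z"
    using Z(2) by (intro integrable_const_bound[where B=C]) auto
  have "AE x in M. norm ((\<epsilon> x)\<^sup>2) \<le> K\<^sup>2" "AE x in M. norm (Z x * (\<epsilon> x)\<^sup>2) \<le> \<bar>C\<bar> * K\<^sup>2"
    using \<epsilon>_bounded by (auto simp: abs_mult intro!: mult_mono Z_le abs_power_le[of _ K 2, simplified])
  then have int_\<epsilon>2: "integrable M (\<lambda>x. (\<epsilon> x)\<^sup>2)" and int_Z\<epsilon>2: "integrable M (\<lambda>x. Z x * (\<epsilon> x)\<^sup>2)"
    by (auto intro!: integrable_const_bound)
  have "(\<integral>x. Z x * clip K (\<epsilon> x) \<partial>M) = (\<integral>x. Z x * \<epsilon> x \<partial>M)"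
    using clip_AE by (intro integral_cong_AE) auto
  also have "\<dots> = 0"
    using integral_bounded_mult_eq_cond_exp_const[OF subalgebra \<epsilon>(2) cond_exp Z] by simp
  finally show "(\<integral>x. Z x * clip K (\<epsilon> x) \<partial>M) = 0" .
  have "(\<integral>x. Z x * ((clip K (\<epsilon> x))\<^sup>2 - \<sigma>2) \<partial>M) = (\<integral>x. Z x * (\<epsilon> x)\<^sup>2 - \<sigma>2 * Z x \<partial>M)"
    using clip_AE by (intro integral_cong_AE) (auto simp: algebra_simps)
  also have "\<dots> = (\<integral>x. Z x * (\<epsilon> x)\<^sup>2 \<partial>M) - \<sigma>2 * (\<integral>x. Z x \<partial>M)"
    using int_Z int_Z\<epsilon>2 by simp
  also have "\<dots> = 0"
    using integral_bounded_mult_eq_cond_exp_const[OF subalgebra int_\<epsilon>2 cond_var Z] by simp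
  finally show "(\<integral>x. Z x * ((clip K (\<epsilon> x))\<^sup>2 - \<sigma>2) \<partial>M) = 0" .
qed

locale bounded_innovations = prob_space M for M :: "'a measure" +
  fixes F :: "int \<Rightarrow> 'a measure" and e :: "int \<Rightarrow> 'a \<Rightarrow> real" and K \<sigma>2 :: real
  assumes subalgebra: "\<And>i. subalgebra M (F i)"
    and filtration_mono: "\<And>i i'. i \<le> i' \<Longrightarrow> sets (F i) \<subseteq> sets (F i')"
    and adapted: "\<And>i. e i \<in> borel_measurable (F i)"
    and bounded: "\<And>i x. x \<in> space M \<Longrightarrow> \<bar>e i x\<bar> \<le> K"
    and orthogonal: "\<And>i Z C. Z \<in> borel_measurable (F (i - 1)) \<Longrightarrow> (\<And>x. x \<in> space M \<Longrightarrow> \<bar>Z x\<bar> \<le> C)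
              \<Longrightarrow> (\<integral>x. Z x * e i x \<partial>M) = 0"
    and square_orthogonal: "\<And>i Z C. Z \<in> borel_measurable (F (i - 1)) \<Longrightarrow> (\<And>x. x \<in> space M \<Longrightarrow> \<bar>Z x\<bar> \<le> C)
              \<Longrightarrow> (\<integral>x. Z x * ((e i x)\<^sup>2 - \<sigma>2) \<partial>M) = 0"
begin

lemma measurable_filtration_mono:
  assumes "f \<in> borel_measurable (F i)" "i \<le> i'"
  shows "f \<in> borel_measurable (F i')"
proof -
  have "subalgebra (F i') (F i)"
    using subalgebra filtration_mono[OF assms(2)] by (simp add: subalgebra_def)
  from measurable_from_subalg[OF this assms(1)] show ?thesis .
qed

lemma lagged_predictable:
  assumes "\<And>s. G s \<in> borel_measurable (F (int s - 1 - int j))"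
  shows "G s \<in> borel_measurable (F (int (s - 1) - int j))"
  using assms by (rule measurable_filtration_mono) (cases s; simp)

lemma strong_law_predictable_mult_innovation:
  assumes G: "\<And>s. G s \<in> borel_measurable (F (int s - 1 - int j))" "\<And>s x. x \<in> space M \<Longrightarrow> \<bar>G s x\<bar> \<le> C"
  shows "AE x in M. (\<lambda>t. (1 / real t) * (\<Sum>s=1..t. G s x * e (int s - int j) x)) \<longlonglongrightarrow> 0"
proof (rule strong_law_predictable_mult_martingale_difference[where F="\<lambda>n. F (int n - int j)" and KH=K])
  show "G n \<in> borel_measurable (F (int (n - 1) - int j))" for n
    by (rule lagged_predictable[OF G(1)])
qed (auto intro!: subalgebra filtration_mono adapted bounded orthogonal G(2))

lemma strong_law_predictable_mult_centred_square:
  assumes G: "\<And>s. G s \<in> borel_measurable (F (int s - 1 - int j))" "\<And>s x. x \<in> space M \<Longrightarrow> \<bar>G s x\<bar> \<le> C"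
  shows "AE x in M. (\<lambda>t. (1 / real t) * (\<Sum>s=1..t. G s x * ((e (int s - int j) x)\<^sup>2 - \<sigma>2))) \<longlonglongrightarrow> 0"
proof (rule strong_law_predictable_mult_martingale_difference[where F="\<lambda>n. F (int n - int j)" and KH="K\<^sup>2 + \<bar>\<sigma>2\<bar>"])
  show "\<bar>(e (int s - int j) x)\<^sup>2 - \<sigma>2\<bar> \<le> K\<^sup>2 + \<bar>\<sigma>2\<bar>" if "x \<in> space M" for x s
  proof -
    have "(e (int s - int j) x)\<^sup>2 \<le> K\<^sup>2"
      using abs_power_le[OF bounded[OF that, of "int s - int j"], of 2] by simp
    then show ?thesis
      using zero_le_power2[of "e (int s - int j) x"] abs_ge_self[of \<sigma>2] abs_ge_minus_self[of \<sigma>2]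
      unfolding abs_le_iff by linarith
  qed
  show "(\<lambda>x. (e (int s - int j) x)\<^sup>2 - \<sigma>2) \<in> borel_measurable (F (int s - int j))" for s
    using adapted by measurable
  show "G n \<in> borel_measurable (F (int (n - 1) - int j))" for n
    by (rule lagged_predictable[OF G(1)])
qed (auto intro!: subalgebra filtration_mono square_orthogonal G(2))

end

lemma (in prob_space) AE_frozen_kappa_phi_terms_tendsto_zero:
  fixes y \<epsilon> :: "int \<Rightarrow> 'a \<Rightarrow> real"
  assumes y_meas: "\<And>t. y t \<in> borel_measurable M"
    and mds_adapted: "\<And>t. \<epsilon> t \<in> borel_measurable (nat_filtration M y t)"
    and mds_int: "\<And>t. integrable M (\<epsilon> t)"
    and mds: "\<And>t. AE x in M. real_cond_exp M (nat_filtration M y (t - 1)) (\<epsilon> t) x = 0"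
    and D3: "\<And>t. AE x in M. real_cond_exp M (nat_filtration M y (t - 1)) (\<lambda>x. (\<epsilon> t x)\<^sup>2) x = \<sigma>2"
    and D4: "AE x in M. \<forall>t. \<bar>\<epsilon> t x\<bar> \<le> K"
    and \<beta>: "0 \<le> \<beta>" "\<beta> \<le> 1"
  shows "AE x in M.
    (\<forall>j\<le>u. (\<lambda>t. (1 / real t) * (\<Sum>s=1..t.
        (kappa_phi_frozen \<beta> \<kappa> (Suc u) (rls_theta \<beta> (\<lambda>n. y (int n) x)) s j)\<^sup>2
        * ((\<epsilon> (int s - int j) x)\<^sup>2 - \<sigma>2))) \<longlonglongrightarrow> 0) \<and>
    (\<forall>j k. j < k \<longrightarrow> k \<le> u \<longrightarrow> (\<lambda>t. (1 / real t) * (\<Sum>s=1..t.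
        kappa_phi_frozen \<beta> \<kappa> (Suc u) (rls_theta \<beta> (\<lambda>n. y (int n) x)) s j
        * kappa_phi_frozen \<beta> \<kappa> (Suc u) (rls_theta \<beta> (\<lambda>n. y (int n) x)) s k
        * \<epsilon> (int s - int k) x * \<epsilon> (int s - int j) x)) \<longlonglongrightarrow> 0)"
proof -
  let ?F = "nat_filtration M y" and ?e = "\<lambda>i x. clip K (\<epsilon> i x)"
    and ?c = "\<lambda>x. kappa_phi_frozen \<beta> \<kappa> (Suc u) (rls_theta \<beta> (\<lambda>n. y (int n) x))"
  note subalgebra = subalgebra_nat_filtration[of y, OF y_meas]
  have D4': "AE x in M. \<bar>\<epsilon> t x\<bar> \<le> K" for t
    using D4 by auto
  note orthogonal = clipped_martingale_difference_orthogonal[OF subalgebra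
      measurable_from_subalg[OF subalgebra mds_adapted] mds_int mds D3 D4']
  interpret bounded_innovations M ?F ?e "\<bar>K\<bar>" \<sigma>2
  proof
    show "sets (?F i) \<subseteq> sets (?F i')" if "i \<le> i'" for i i'
      using that by (rule nat_filtration_mono)
    show "?e i \<in> borel_measurable (?F i)" for i
      using mds_adapted[of i] by measurable
    show "(\<integral>x. Z x * ?e i x \<partial>M) = 0"
      if "Z \<in> borel_measurable (?F (i - 1))" "\<And>x. x \<in> space M \<Longrightarrow> \<bar>Z x\<bar> \<le> C" for i Z C
      using that by (rule orthogonal(1))
    show "(\<integral>x. Z x * ((?e i x)\<^sup>2 - \<sigma>2) \<partial>M) = 0"
      if "Z \<in> borel_measurable (?F (i - 1))" "\<And>x. x \<in> space M \<Longrightarrow> \<bar>Z x\<bar> \<le> C" for i Z C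
      using that by (rule orthogonal(2))
  qed (use subalgebra abs_clip_le in auto)
  obtain B where B: "\<And>x s j. \<bar>?c x s j\<bar> \<le> B j"
    using kappa_phi_frozen_bounded[OF \<beta>] by blast
  have c_predictable: "(\<lambda>x. ?c x s k) \<in> borel_measurable (?F (int s - 1 - int j))" if "j \<le> k" "k \<le> u" for s j k
    using that by (intro kappa_phi_frozen_measurable rls_theta_nat_filtration_measurable) auto
  have diagonal: "AE x in M. (\<lambda>t. (1 / real t) * (\<Sum>s=1..t. (?c x s j)\<^sup>2
      * ((?e (int s - int j) x)\<^sup>2 - \<sigma>2))) \<longlonglongrightarrow> 0" if "j \<le> u" for j
    using c_predictable[OF order_refl that] abs_power_le[OF B, of _ _ _ 2]
    by (intro strong_law_predictable_mult_centred_square[where C="(B j)\<^sup>2"]) auto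
  have off_diagonal: "AE x in M. (\<lambda>t. (1 / real t) * (\<Sum>s=1..t. ?c x s j * ?c x s k * ?e (int s - int k) x
      * ?e (int s - int j) x)) \<longlonglongrightarrow> 0" if "j < k" "k \<le> u" for j k
  proof (rule strong_law_predictable_mult_innovation[where C="B j * B k * \<bar>K\<bar>"])
    have [measurable]: "(\<lambda>x. ?c x s j) \<in> borel_measurable (?F (int s - 1 - int j))"
      "(\<lambda>x. ?c x s k) \<in> borel_measurable (?F (int s - 1 - int j))"
      "?e (int s - int k) \<in> borel_measurable (?F (int s - 1 - int j))" for s
      using that by (auto intro: c_predictable measurable_filtration_mono[OF adapted])
    show "(\<lambda>x. ?c x s j * ?c x s k * ?e (int s - int k) x) \<in> borel_measurable (?F (int s - 1 - int j))" for s
      by measurable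
    show "\<bar>?c x s j * ?c x s k * ?e (int s - int k) x\<bar> \<le> B j * B k * \<bar>K\<bar>" for x s
      unfolding abs_mult using B order_trans[OF abs_ge_zero B] by (intro mult_mono abs_clip_le) auto
  qed
  have "AE x in M. \<forall>j\<le>u. (\<lambda>t. (1 / real t) * (\<Sum>s=1..t. (?c x s j)\<^sup>2
      * ((?e (int s - int j) x)\<^sup>2 - \<sigma>2))) \<longlonglongrightarrow> 0"
    unfolding AE_all_countable by (intro allI AE_impI diagonal)
  moreover have "AE x in M. \<forall>j k. j < k \<longrightarrow> k \<le> u \<longrightarrow> (\<lambda>t. (1 / real t) * (\<Sum>s=1..t.
      ?c x s j * ?c x s k * ?e (int s - int k) x * ?e (int s - int j) x)) \<longlonglongrightarrow> 0"
    unfolding AE_all_countable by (intro allI AE_impI off_diagonal)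
  moreover have "AE x in M. \<forall>i. ?e i x = \<epsilon> i x"
    using D4 by (auto intro: clip_eq_self)
  ultimately show ?thesis
    by eventually_elim simp
qed

theorem lemma4p3:
  fixes M :: "'a measure" and y \<epsilon> :: "int \<Rightarrow> 'a \<Rightarrow> real" and \<kappa> :: "nat \<Rightarrow> real"
    and \<sigma>2 K \<beta> :: real and kst :: "'a \<Rightarrow> nat" and Kst :: "'a \<Rightarrow> real" and u :: nat
  assumes prob: "prob_space M"
    (* real, mean-zero, covariance-stationary *)
    and y_meas: "\<And>t. y t \<in> borel_measurable M"
    and y_sq: "\<And>t. integrable M (\<lambda>x. (y t x)\<^sup>2)"
    and y_mean: "\<And>t. integral\<^sup>L M (y t) = 0"
    and y_cov: "\<And>t h. integral\<^sup>L M (\<lambda>x. y t x * y (t + h) x) = integral\<^sup>L M (\<lambda>x. y 0 x * y h x)"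
    (* D1 *)
    and D1: "measure M {x \<in> space M. (y 1 x)\<^sup>2 > 0} = 1"
    (* D2 *)
    and D2_ma: "AE x in M. \<forall>t. (\<lambda>s. \<kappa> s * \<epsilon> (t - int s) x) sums y t x"
    and D2_k0: "\<kappa> 0 = 1"
    and D2_abs: "summable (\<lambda>s. \<bar>\<kappa> s\<bar>)"
    and D2_root: "\<And>z::complex. cmod z \<le> 1 \<Longrightarrow> (\<Sum>s. complex_of_real (\<kappa> s) * z ^ s) \<noteq> 0"
    and mds_adapted: "\<And>t. \<epsilon> t \<in> borel_measurable (nat_filtration M y t)"
    and mds_int: "\<And>t. integrable M (\<epsilon> t)"
    and mds: "\<And>t. AE x in M. real_cond_exp M (nat_filtration M y (t - 1)) (\<epsilon> t) x = 0"
    (* D3 *)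
    and D3: "\<And>t. AE x in M.
               real_cond_exp M (nat_filtration M y (t - 1)) (\<lambda>x. (\<epsilon> t x)\<^sup>2) x = \<sigma>2"
    (* D4 *)
    and D4: "AE x in M. \<forall>t. \<bar>\<epsilon> t x\<bar> \<le> K"
    (* algorithm and stability of theta *)
    and \<beta>: "0 \<le> \<beta>" "\<beta> \<le> 1"
    and kst_meas: "kst \<in> measurable M (count_space UNIV)"
    and Kst_meas: "Kst \<in> borel_measurable M"
    and stab: "AE x in M. 0 < Kst x \<and> Kst x < 1 \<and>
                 (\<forall>t\<ge>1. \<bar>rls_theta \<beta> (\<lambda>n. y (int n) x) (t + kst x)\<bar> \<le> Kst x)"
  shows "AE x in M.
    (\<lambda>t. (1 / real t) * (\<Sum>s = 1..t.
            (\<Sum>j = 0..u. kappa_phi \<beta> \<kappa> (rls_theta \<beta> (\<lambda>n. y (int n) x)) s j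
                           * \<epsilon> (int s - int j) x)\<^sup>2)
         - (\<sigma>2 / real t) * (\<Sum>s = 1..t. \<Sum>j = 0..u.
            (kappa_phi \<beta> \<kappa> (rls_theta \<beta> (\<lambda>n. y (int n) x)) s j)\<^sup>2))
    \<longlonglongrightarrow> 0"
proof -
  interpret prob_space M by (rule prob)
  have "{x \<in> space M. (y 1 x)\<^sup>2 > 0} \<in> sets M"
    using y_meas[of 1] by measurable
  then have y_1: "AE x in M. (y 1 x)\<^sup>2 > 0"
    using D1 by (simp add: prob_Collect_eq_1)
  note frozen_terms = AE_frozen_kappa_phi_terms_tendsto_zero[where \<kappa>=\<kappa> and u=u, OF y_meas mds_adapted mds_int mds D3 D4 \<beta>]
  show ?thesis
    using D2_ma D4 stab y_1 frozen_terms
  proof eventually_elim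
    case (elim x)
    have y_bounded: "\<bar>y (int n) x\<bar> \<le> K * (\<Sum>s. \<bar>\<kappa> s\<bar>)" for n
      by (rule abs_sums_le[OF elim(1)[rule_format, of "int n"] D2_abs]) (use elim(2) in simp)
    have \<theta>_bounded: "\<bar>rls_theta \<beta> (\<lambda>n. y (int n) x) n\<bar> \<le> Kst x" if "n \<ge> Suc (kst x)" for n
      using elim(3)[THEN conjunct2, THEN conjunct2, rule_format, of "n - kst x"] that by simp
    have "(\<lambda>t. (1 / real t) * (\<Sum>s=1..t. quadratic_deviation \<sigma>2 u (\<lambda>i. \<epsilon> i x)
        (kappa_phi \<beta> \<kappa> (rls_theta \<beta> (\<lambda>n. y (int n) x))) s)) \<longlonglongrightarrow> 0"
      using elim(5) by (intro cesaro_quadratic_deviation_rls[OF \<beta> y_bounded _ \<theta>_bounded, where K=K])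
        (use elim(2-4) in auto)
    then show ?case
      by (simp only: cesaro_quadratic_deviation_eq)
  qed
qed

end
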